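(* Let $T_*>\tau_D$ and $\mu_0\in(0,1)$ be constants. There exist a continuous function $\xi_{\mu_0}:[0,T_*]\to(0,1]$ and a constant $\gamma_2>0$, depending only on $\mu_0,n,a_*,a^*,\tau_D,T_*$, with $\xi_{\mu_0}(0)=1$, $\xi_{\mu_0}$ strictly decreasing on $[0,\tau_D]$, strictly increasing on $[\tau_D,T_*]$ and $\xi_{\mu_0}(T_* )<1$, such that the following holds. For any trajectory of system (5) with $\|z\|_\infty<\infty$, any $t_0\ge 0$, any constant $d_0>0$, and any $i,m\in\mathcal V_F$ such that the arc $(i,m)$ belongs to $\mathcal E_{\sigma(t)}$ for all $t\in[t_0,t_0+\tau_D)$ and $$|x_i(t)|_{\mathcal L(y(t))}\le\mu_0|x(t_0)|_{\mathcal L(y(t_0))}+d_0\quad\text{for all }t\in[t_0,t_0+\tau_D),$$ we have $$|x_m(t)|_{\mathcal L(y(t))}\le\xi_{\mu_0}(t-t_0)\,|x(t_0)|_{\mathcal L(y(t_0))}+\gamma_2\|z\|_\infty+d_0\quad\text{for all }t\in[t_0,t_0+T_*].$$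
   Context: Standing setup. Fix integers $n\ge 2$, $k\ge 1$, $d\ge 1$. The follower set is $\mathcal V_F=\{1,\dots,n\}$ and the leader set is $\mathcal V_L=\{\hat 1,\dots,\hat k\}$ (disjoint from $\mathcal V_F$); $\mathcal V=\mathcal V_F\cup\mathcal V_L$. The interaction topology is a time-varying digraph $\mathcal G_{\sigma(t)}=(\mathcal V,\mathcal E_{\sigma(t)})$, where $\sigma:[0,\infty)\to\mathcal P$ is a piecewise constant switching signal taking values in a finite set $\mathcal P$ of digraphs on $\mathcal V$; no arc of any of these digraphs enters a leader. An arc $(j,i)$ means that $i$ receives information from $j$. Dwell-time assumption: any two consecutive switching instants of $\sigma$ are separated by at least $\tau_D>0$. For $i\in\mathcal V_F$, $N_i(\sigma(t))=\{j\in\mathcal V_F:(j,i)\in\mathcal E_{\sigma(t)}\}$ and $L_i(\sigma(t))=\{j\in\mathcal V_L:(j,i)\in\mathcal E_{\sigma(t)}\}$. System (5): $\dot y_i=u_i(y,t)$ for $i=1,\dots,k$, and $\dot x_i=\sum_{j\in N_i(\sigma(t))}a_{ij}(x,y,t)(x_j-x_i)+\sum_{j\in L_i(\sigma(t))}b_{ij}(x,y,t)(y_j-x_i)+w_i(t)$ for $i=1,\dots,n$, where $x_i,y_j\in\mathbb R^d$, $x=(x_1,\dots,x_n)$, $y=(y_1,\dots,y_k)$; each $u_i(y,t)$ is continuous in $y$ and piecewise continuous in $t$; each $w_i$ is continuous; the weights $a_{ij},b_{ij}$ are continuous and satisfy $a_*\le a_{ij}(x,y,t)\le a^*$, $b_{ij}(x,y,t)\ge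 b_*$ for all $x,y,t$, with constants $0<a_*\le a^*$, $b_*>0$. Along a trajectory, $z(t)=(u_1(y(t),t),\dots,u_k(y(t),t),w_1(t),\dots,w_n(t))\in\mathbb R^{(n+k)d}$ and $\|z\|_\infty=\sup_{t\ge0}|z(t)|$. Set notation: $|\cdot|$ is the Euclidean norm; for a closed convex $K\subset\mathbb R^d$, $|v|_K=\inf_{p\in K}|v-p|$; $\mathcal L(y(t))=\mathrm{co}\{y_1(t),\dots,y_k(t)\}$ (convex hull); $|x(t)|_{\mathcal L(y(t))}=\max_{i\in\mathcal V_F}|x_i(t)|_{\mathcal L(y(t))}$. *)

theory Defs
  imports "HOL-Analysis.Analysis"
begin

text \<open>Points of R^d are represented as functions nat => real vanishing at
coordinates c >= d (so that the dimension d can be quantified inside the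
statement). Followers are indexed 1..n, leaders 1..k.\<close>

datatype vtx = Fv nat | Lv nat

type_synonym pt = "nat \<Rightarrow> real"
type_synonym state = "nat \<Rightarrow> nat \<Rightarrow> real"
type_synonym digraph = "(vtx \<times> vtx) set"

definition vec_space :: "nat \<Rightarrow> pt set" where
  "vec_space d = {v. \<forall>c\<ge>d. v c = 0}"

definition state_space :: "nat \<Rightarrow> nat \<Rightarrow> state set" where
  "state_space N d = {X. \<forall>i c. (i \<notin> {1..N} \<or> d \<le> c) \<longrightarrow> X i c = 0}"

definition eucl :: "nat \<Rightarrow> pt \<Rightarrow> real" where
  "eucl d v = sqrt (\<Sum>c<d. (v c)\<^sup>2)"

definition conv_pts :: "nat \<Rightarrow> state \<Rightarrow> pt set" where
  "conv_pts k Y = {p. \<exists>l::nat\<Rightarrow>real. (\<forall>j\<in>{1..k}. 0 \<le> l j) \<and> (\<Sum>j=1..k. l j) = 1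
                        \<and> p = (\<lambda>c. \<Sum>j=1..k. l j * Y j c)}"

definition set_dist :: "nat \<Rightarrow> pt \<Rightarrow> pt set \<Rightarrow> real" where
  "set_dist d v K = Inf ((\<lambda>p. eucl d (\<lambda>c. v c - p c)) ` K)"

definition st :: "nat \<Rightarrow> (nat \<Rightarrow> real \<Rightarrow> pt) \<Rightarrow> real \<Rightarrow> state" where
  "st N x t = (\<lambda>i. if i \<in> {1..N} then x i t else (\<lambda>c. 0))"

definition fdist :: "nat \<Rightarrow> nat \<Rightarrow> (nat \<Rightarrow> real \<Rightarrow> pt) \<Rightarrow> (nat \<Rightarrow> real \<Rightarrow> pt) \<Rightarrow> nat \<Rightarrow> real \<Rightarrow> real" where
  "fdist k d x y i t = set_dist d (x i t) (conv_pts k (st k y t))"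

definition hdist :: "nat \<Rightarrow> nat \<Rightarrow> nat \<Rightarrow> (nat \<Rightarrow> real \<Rightarrow> pt) \<Rightarrow> (nat \<Rightarrow> real \<Rightarrow> pt) \<Rightarrow> real \<Rightarrow> real" where
  "hdist n k d x y t = Max ((\<lambda>i. fdist k d x y i t) ` {1..n})"

text \<open>Piecewise constant switching signal with dwell time tauD: switching
instants Sw in (0,inf), pairwise separated by at least tauD, and sigma constant
between consecutive instants (right-continuous convention).\<close>
definition dwell_switching :: "(real \<Rightarrow> digraph) \<Rightarrow> real \<Rightarrow> bool" where
  "dwell_switching \<sigma> \<tau>D \<longleftrightarrow> (\<exists>Sw. Sw \<subseteq> {0<..}
     \<and> (\<forall>s\<in>Sw. \<forall>s'\<in>Sw. s \<noteq> s' \<longrightarrow> \<tau>D \<le> \<bar>s - s'\<bar>)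
     \<and> (\<forall>t t'. 0 \<le> t \<and> t \<le> t' \<and> (\<forall>s\<in>Sw. \<not> (t < s \<and> s \<le> t')) \<longrightarrow> \<sigma> t = \<sigma> t'))"

definition admissible_topology :: "nat \<Rightarrow> nat \<Rightarrow> (real \<Rightarrow> digraph) \<Rightarrow> bool" where
  "admissible_topology n k \<sigma> \<longleftrightarrow> finite (\<sigma> ` {0..})
     \<and> (\<forall>t\<ge>0. \<sigma> t \<subseteq> (Fv ` {1..n} \<union> Lv ` {1..k}) \<times> (Fv ` {1..n} \<union> Lv ` {1..k})
              \<and> (\<forall>v j. (v, Lv j) \<notin> \<sigma> t))"

definition Nset :: "nat \<Rightarrow> (real \<Rightarrow> digraph) \<Rightarrow> nat \<Rightarrow> real \<Rightarrow> nat set" where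
  "Nset n \<sigma> i t = {j\<in>{1..n}. (Fv j, Fv i) \<in> \<sigma> t}"

definition Lset :: "nat \<Rightarrow> (real \<Rightarrow> digraph) \<Rightarrow> nat \<Rightarrow> real \<Rightarrow> nat set" where
  "Lset k \<sigma> i t = {j\<in>{1..k}. (Lv j, Fv i) \<in> \<sigma> t}"

definition pw_cont :: "(real \<Rightarrow> pt) \<Rightarrow> bool" where
  "pw_cont f \<longleftrightarrow> (\<forall>T. \<exists>D. finite D \<and>
      (\<forall>t\<in>{0..T} - D. continuous (at t within {0..}) f)
    \<and> (\<forall>t\<in>D. (t > 0 \<longrightarrow> (\<exists>l. (f \<longlongrightarrow> l) (at_left t))) \<and> (\<exists>l. (f \<longlongrightarrow> l) (at_right t))))"

definition znorm :: "nat \<Rightarrow> nat \<Rightarrow> nat \<Rightarrow> (nat \<Rightarrow> state \<Rightarrow> real \<Rightarrow> pt) \<Rightarrow> (nat \<Rightarrow> real \<Rightarrow> pt)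
                      \<Rightarrow> (nat \<Rightarrow> real \<Rightarrow> pt) \<Rightarrow> real \<Rightarrow> real" where
  "znorm n k d U W y t = sqrt ((\<Sum>i=1..k. (eucl d (U i (st k y t) t))\<^sup>2) + (\<Sum>i=1..n. (eucl d (W i t))\<^sup>2))"

definition traj5 :: "nat \<Rightarrow> nat \<Rightarrow> nat \<Rightarrow> real \<Rightarrow> real \<Rightarrow> real \<Rightarrow> real \<Rightarrow> (real \<Rightarrow> digraph)
    \<Rightarrow> (nat \<Rightarrow> nat \<Rightarrow> state \<Rightarrow> state \<Rightarrow> real \<Rightarrow> real) \<Rightarrow> (nat \<Rightarrow> nat \<Rightarrow> state \<Rightarrow> state \<Rightarrow> real \<Rightarrow> real)
    \<Rightarrow> (nat \<Rightarrow> state \<Rightarrow> real \<Rightarrow> pt) \<Rightarrow> (nat \<Rightarrow> real \<Rightarrow> pt)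
    \<Rightarrow> (nat \<Rightarrow> real \<Rightarrow> pt) \<Rightarrow> (nat \<Rightarrow> real \<Rightarrow> pt) \<Rightarrow> bool" where
  "traj5 n k d \<tau>D a_lo a_hi b_lo \<sigma> a b U W x y \<longleftrightarrow>
     dwell_switching \<sigma> \<tau>D \<and> admissible_topology n k \<sigma>
   \<and> (\<forall>i\<in>{1..n}. \<forall>j\<in>{1..n}. (\<forall>X Y t. a_lo \<le> a i j X Y t \<and> a i j X Y t \<le> a_hi)
        \<and> continuous_on (state_space n d \<times> state_space k d \<times> UNIV) (\<lambda>(X, Y, t). a i j X Y t))
   \<and> (\<forall>i\<in>{1..n}. \<forall>j\<in>{1..k}. (\<forall>X Y t. b_lo \<le> b i j X Y t)
        \<and> continuous_on (state_space n d \<times> state_space k d \<times> UNIV) (\<lambda>(X, Y, t). b i j X Y t))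
   \<and> (\<forall>i\<in>{1..k}. (\<forall>Y t. U i Y t \<in> vec_space d)
        \<and> (\<forall>t. continuous_on (state_space k d) (\<lambda>Y. U i Y t))
        \<and> (\<forall>Y\<in>state_space k d. pw_cont (\<lambda>t. U i Y t)))
   \<and> (\<forall>i\<in>{1..n}. (\<forall>t. W i t \<in> vec_space d) \<and> continuous_on {0..} (W i))
   \<and> (\<forall>i\<in>{1..n}. \<forall>t\<ge>0. x i t \<in> vec_space d)
   \<and> (\<forall>i\<in>{1..k}. \<forall>t\<ge>0. y i t \<in> vec_space d)
   \<and> (\<exists>E. (\<forall>T. finite (E \<inter> {0..T}))
      \<and> (\<forall>c<d. (\<forall>i\<in>{1..n}. continuous_on {0..} (\<lambda>s. x i s c))
             \<and> (\<forall>i\<in>{1..k}. continuous_on {0..} (\<lambda>s. y i s c)))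
      \<and> (\<forall>t. t > 0 \<and> t \<notin> E \<longrightarrow> (\<forall>c<d.
           (\<forall>i\<in>{1..k}. ((\<lambda>s. y i s c) has_real_derivative U i (st k y t) t c) (at t))
         \<and> (\<forall>i\<in>{1..n}. ((\<lambda>s. x i s c) has_real_derivative
               (\<Sum>j\<in>Nset n \<sigma> i t. a i j (st n x t) (st k y t) t * (x j t c - x i t c))
             + (\<Sum>j\<in>Lset k \<sigma> i t. b i j (st n x t) (st k y t) t * (y j t c - x i t c))
             + W i t c) (at t)))))"

end

theory Submission
  imports Defs
begin

(*
  Write f_j(t) = |x_j(t)|_L(y(t)), V(t) = max_j f_j(t) and Z = sup |z|.  The proof is a
  comparison argument for upper right Dini derivatives:
   1. the distance to a convex hull is Lipschitz in the point and in the generators, and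
      convex along Euler steps of the consensus dynamics;
   2. comparison principles for continuous functions whose upper right Dini derivative is
      bounded outside a finite set;
   3. along a trajectory (locale follower_system) D+ f_j <= sum_l a_jl (f_l - f_j) + 2 Z,
      hence V(t) <= V(t0) + 2 Z (t - t0);
   4. f_m is compared with exp(-c s)-contraction towards rho V(t0) on [t0, t0+tauD] (using
      the arc from i) and with exp(-c2 s)-recovery on [t0+tauD, t0+T*], where
      c = n a_hi + a_lo, c2 = n a_hi, rho = (c2 + a_lo mu0)/c and gamma = 2/c2 + 2 T*.
*)

lemma eucl_L2: "eucl d v = L2_set v {..<d}"
  by (simp add: eucl_def L2_set_def)

lemma eucl_nonneg: "0 \<le> eucl d v"
  by (simp add: eucl_L2)

lemma eucl_zero: "eucl d (\<lambda>c. 0) = 0"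
  by (simp add: eucl_def)

lemma eucl_triangle: "eucl d (\<lambda>c. u c + v c) \<le> eucl d u + eucl d v"
  unfolding eucl_L2 by (rule L2_set_triangle_ineq)

lemma eucl_triangle_diff:
  "eucl d (\<lambda>c. u c - w c) \<le> eucl d (\<lambda>c. u c - v c) + eucl d (\<lambda>c. v c - w c)"
  using eucl_triangle[of d "\<lambda>c. u c - v c" "\<lambda>c. v c - w c"] by simp

lemma eucl_scale: "eucl d (\<lambda>c. r * v c) = \<bar>r\<bar> * eucl d v"
proof -
  have "eucl d (\<lambda>c. r * v c) = sqrt (r\<^sup>2 * (\<Sum>c<d. (v c)\<^sup>2))"
    by (simp add: eucl_def power_mult_distrib sum_distrib_left)
  also have "\<dots> = \<bar>r\<bar> * eucl d v"
    by (simp add: eucl_def real_sqrt_mult)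
  finally show ?thesis .
qed

lemma eucl_commute: "eucl d (\<lambda>c. u c - v c) = eucl d (\<lambda>c. v c - u c)"
  unfolding eucl_def by (simp add: power2_commute)

lemma eucl_sum: "finite I \<Longrightarrow> eucl d (\<lambda>c. \<Sum>i\<in>I. g i c) \<le> (\<Sum>i\<in>I. eucl d (g i))"
proof (induction I rule: finite_induct)
  case empty
  then show ?case by (simp add: eucl_zero)
next
  case (insert a I)
  have "eucl d (\<lambda>c. \<Sum>i\<in>insert a I. g i c) = eucl d (\<lambda>c. g a c + (\<Sum>i\<in>I. g i c))"
    using insert by simp
  also have "\<dots> \<le> eucl d (g a) + eucl d (\<lambda>c. \<Sum>i\<in>I. g i c)"
    using eucl_triangle[of d "g a"] by simp
  finally show ?case using insert by simp
qed

lemma eucl_le_sum_abs: "eucl d v \<le> (\<Sum>c<d. \<bar>v c\<bar>)"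
  unfolding eucl_L2 by (rule L2_set_le_sum_abs)

section \<open>Distance to the convex hull of finitely many points\<close>

lemma generator_in_conv: "j \<in> {1..k} \<Longrightarrow> Y j \<in> conv_pts k Y"
proof -
  assume j: "j \<in> {1..k}"
  let ?l = "\<lambda>i. if i = j then 1 else (0::real)"
  have "(\<Sum>i=1..k. ?l i) = 1" using j by (simp add: sum.delta)
  moreover have "Y j = (\<lambda>c. \<Sum>i=1..k. ?l i * Y i c)"
  proof
    fix c
    have "(\<Sum>i=1..k. ?l i * Y i c) = (\<Sum>i=1..k. if i = j then Y i c else 0)"
      by (rule sum.cong) auto
    then show "Y j c = (\<Sum>i=1..k. ?l i * Y i c)" using j by (simp add: sum.delta)
  qed
  ultimately show ?thesis unfolding conv_pts_def by (intro CollectI exI[of _ ?l]) auto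
qed

lemma conv_nonempty: "1 \<le> k \<Longrightarrow> conv_pts k Y \<noteq> {}"
  using generator_in_conv[of 1 k Y] by auto

lemma conv_combination:
  assumes I: "finite I" and \<alpha>: "0 \<le> \<alpha>" and w: "\<forall>i\<in>I. 0 \<le> w i" and s: "\<alpha> + sum w I = 1"
    and p0: "p0 \<in> conv_pts k Y" and p: "\<forall>i\<in>I. p i \<in> conv_pts k Y"
  shows "(\<lambda>c. \<alpha> * p0 c + (\<Sum>i\<in>I. w i * p i c)) \<in> conv_pts k Y"
proof -
  obtain l0 where l0: "\<forall>j\<in>{1..k}. 0 \<le> l0 j" "(\<Sum>j=1..k. l0 j) = 1"
      "p0 = (\<lambda>c. \<Sum>j=1..k. l0 j * Y j c)"
    using p0 unfolding conv_pts_def by blast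
  have "\<forall>i\<in>I. \<exists>l. (\<forall>j\<in>{1..k}. 0 \<le> l j) \<and> (\<Sum>j=1..k. l j) = 1
      \<and> p i = (\<lambda>c. \<Sum>j=1..k. l j * Y j c)"
    using p unfolding conv_pts_def by blast
  from bchoice[OF this] obtain L where L: "\<forall>i\<in>I. (\<forall>j\<in>{1..k}. 0 \<le> L i j) \<and> (\<Sum>j=1..k. L i j) = 1
      \<and> p i = (\<lambda>c. \<Sum>j=1..k. L i j * Y j c)"
    by blast
  define l where "l = (\<lambda>j. \<alpha> * l0 j + (\<Sum>i\<in>I. w i * L i j))"
  have "\<forall>j\<in>{1..k}. 0 \<le> l j"
    unfolding l_def using l0(1) L w \<alpha> by (auto intro!: add_nonneg_nonneg sum_nonneg)
  moreover have "(\<Sum>j=1..k. l j) = \<alpha> * (\<Sum>j=1..k. l0 j) + (\<Sum>i\<in>I. w i * (\<Sum>j=1..k. L i j))"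
    unfolding l_def by (simp add: sum.distrib sum_distrib_left sum.swap[of _ I])
  then have "(\<Sum>j=1..k. l j) = 1" using l0(2) L s by simp
  moreover have "(\<lambda>c. \<alpha> * p0 c + (\<Sum>i\<in>I. w i * p i c)) = (\<lambda>c. \<Sum>j=1..k. l j * Y j c)"
  proof
    fix c
    have "(\<Sum>i\<in>I. w i * p i c) = (\<Sum>i\<in>I. w i * (\<Sum>j=1..k. L i j * Y j c))"
      by (rule sum.cong) (use L in auto)
    then show "\<alpha> * p0 c + (\<Sum>i\<in>I. w i * p i c) = (\<Sum>j=1..k. l j * Y j c)"
      unfolding l_def l0(3)
      by (simp add: sum.distrib sum_distrib_left sum_distrib_right sum.swap[of _ I] algebra_simps)
  qed
  ultimately show ?thesis unfolding conv_pts_def by blast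
qed

lemma set_dist_le: "p \<in> K \<Longrightarrow> set_dist d v K \<le> eucl d (\<lambda>c. v c - p c)"
  unfolding set_dist_def by (rule cInf_lower) (auto intro: bdd_belowI[of _ 0] eucl_nonneg)

lemma set_dist_nonneg: "K \<noteq> {} \<Longrightarrow> 0 \<le> set_dist d v K"
  unfolding set_dist_def by (rule cInf_greatest) (auto simp: eucl_nonneg)

lemma set_dist_approx:
  assumes "K \<noteq> {}" and "0 < e"
  shows "\<exists>p\<in>K. eucl d (\<lambda>c. v c - p c) < set_dist d v K + e"
proof -
  have "Inf ((\<lambda>p. eucl d (\<lambda>c. v c - p c)) ` K) < set_dist d v K + e"
    using assms(2) by (simp add: set_dist_def)
  then show ?thesis
    using assms(1) by (subst (asm) cInf_less_iff) (auto intro: bdd_belowI[of _ 0] eucl_nonneg)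
qed

lemma set_dist_generator:
  assumes "j \<in> {1..k}"
  shows "set_dist d (Y j) (conv_pts k Y) = 0"
proof -
  have "set_dist d (Y j) (conv_pts k Y) \<le> eucl d (\<lambda>c. Y j c - Y j c)"
    by (rule set_dist_le[OF generator_in_conv[OF assms]])
  moreover have "0 \<le> set_dist d (Y j) (conv_pts k Y)"
    by (rule set_dist_nonneg) (use generator_in_conv[OF assms] in blast)
  ultimately show ?thesis by (simp add: eucl_zero)
qed

lemma set_dist_perturb:
  assumes k: "1 \<le> k" and B: "\<forall>j\<in>{1..k}. eucl d (\<lambda>c. Y' j c - Y j c) \<le> B"
  shows "set_dist d v (conv_pts k Y') \<le> set_dist d w (conv_pts k Y) + eucl d (\<lambda>c. v c - w c) + B"
proof (rule field_le_epsilon)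
  fix e :: real
  assume e: "0 < e"
  obtain p where p: "p \<in> conv_pts k Y" "eucl d (\<lambda>c. w c - p c) < set_dist d w (conv_pts k Y) + e"
    using set_dist_approx[OF conv_nonempty[OF k] e] by blast
  then obtain l where l: "\<forall>j\<in>{1..k}. 0 \<le> l j" "(\<Sum>j=1..k. l j) = 1"
      "p = (\<lambda>c. \<Sum>j=1..k. l j * Y j c)"
    unfolding conv_pts_def by blast
  define p' where "p' = (\<lambda>c. \<Sum>j=1..k. l j * Y' j c)"
  have p': "p' \<in> conv_pts k Y'" unfolding conv_pts_def p'_def using l by blast
  have "eucl d (\<lambda>c. p c - p' c) = eucl d (\<lambda>c. \<Sum>j=1..k. l j * (Y j c - Y' j c))"
    unfolding l(3) p'_def by (simp add: sum_subtractf algebra_simps)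
  also have "\<dots> \<le> (\<Sum>j=1..k. eucl d (\<lambda>c. l j * (Y j c - Y' j c)))"
    by (rule eucl_sum) simp
  also have "\<dots> = (\<Sum>j=1..k. l j * eucl d (\<lambda>c. Y' j c - Y j c))"
    by (rule sum.cong) (use l(1) in \<open>auto simp: eucl_scale eucl_commute[of d "Y _"]\<close>)
  also have "\<dots> \<le> (\<Sum>j=1..k. l j * B)"
    by (rule sum_mono) (use l(1) B in \<open>auto intro: mult_left_mono\<close>)
  also have "\<dots> = B" using l(2) by (simp add: sum_distrib_right[symmetric])
  finally have pp': "eucl d (\<lambda>c. p c - p' c) \<le> B" .
  have "set_dist d v (conv_pts k Y') \<le> eucl d (\<lambda>c. v c - p' c)"
    by (rule set_dist_le[OF p'])
  also have "\<dots> \<le> eucl d (\<lambda>c. v c - w c) + eucl d (\<lambda>c. w c - p c) + eucl d (\<lambda>c. p c - p' c)"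
    using eucl_triangle_diff[of d v p' w] eucl_triangle_diff[of d w p' p] by linarith
  finally show "set_dist d v (conv_pts k Y') \<le> set_dist d w (conv_pts k Y) + eucl d (\<lambda>c. v c - w c) + B + e"
    using p(2) pp' by linarith
qed

lemma set_dist_convex:
  assumes k: "1 \<le> k" and I: "finite I" and \<alpha>: "0 \<le> \<alpha>" and w: "\<forall>i\<in>I. 0 \<le> w i"
    and s: "\<alpha> + sum w I = 1"
  shows "set_dist d (\<lambda>c. \<alpha> * v c + (\<Sum>i\<in>I. w i * q i c)) (conv_pts k Y)
    \<le> \<alpha> * set_dist d v (conv_pts k Y) + (\<Sum>i\<in>I. w i * set_dist d (q i) (conv_pts k Y))"
proof (rule field_le_epsilon)
  fix e :: real
  assume e: "0 < e"
  let ?K = "conv_pts k Y"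
  obtain p0 where p0: "p0 \<in> ?K" "eucl d (\<lambda>c. v c - p0 c) < set_dist d v ?K + e"
    using set_dist_approx[OF conv_nonempty[OF k] e] by blast
  have "\<forall>i\<in>I. \<exists>p. p \<in> ?K \<and> eucl d (\<lambda>c. q i c - p c) < set_dist d (q i) ?K + e"
    using set_dist_approx[OF conv_nonempty[OF k] e] by blast
  from bchoice[OF this] obtain p where p: "\<forall>i\<in>I. p i \<in> ?K \<and> eucl d (\<lambda>c. q i c - p i c) < set_dist d (q i) ?K + e"
    by blast
  have q: "(\<lambda>c. \<alpha> * p0 c + (\<Sum>i\<in>I. w i * p i c)) \<in> ?K"
    by (rule conv_combination[OF I \<alpha> w s p0(1)]) (use p in auto)
  have "set_dist d (\<lambda>c. \<alpha> * v c + (\<Sum>i\<in>I. w i * q i c)) ?K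
     \<le> eucl d (\<lambda>c. (\<alpha> * v c + (\<Sum>i\<in>I. w i * q i c)) - (\<alpha> * p0 c + (\<Sum>i\<in>I. w i * p i c)))"
    by (rule set_dist_le[OF q])
  also have "\<dots> = eucl d (\<lambda>c. \<alpha> * (v c - p0 c) + (\<Sum>i\<in>I. w i * (q i c - p i c)))"
    by (simp add: algebra_simps sum_subtractf)
  also have "\<dots> \<le> eucl d (\<lambda>c. \<alpha> * (v c - p0 c)) + eucl d (\<lambda>c. \<Sum>i\<in>I. w i * (q i c - p i c))"
    by (rule eucl_triangle)
  also have "\<dots> \<le> eucl d (\<lambda>c. \<alpha> * (v c - p0 c)) + (\<Sum>i\<in>I. eucl d (\<lambda>c. w i * (q i c - p i c)))"
    using eucl_sum[OF I, of d "\<lambda>i c. w i * (q i c - p i c)"] by simp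
  also have "\<dots> = \<alpha> * eucl d (\<lambda>c. v c - p0 c) + (\<Sum>i\<in>I. w i * eucl d (\<lambda>c. q i c - p i c))"
    using \<alpha> w by (simp add: eucl_scale)
  also have "\<dots> \<le> \<alpha> * (set_dist d v ?K + e) + (\<Sum>i\<in>I. w i * (set_dist d (q i) ?K + e))"
    by (intro add_mono mult_left_mono sum_mono) (use p0 p \<alpha> w in auto)
  also have "\<dots> = \<alpha> * set_dist d v ?K + (\<Sum>i\<in>I. w i * set_dist d (q i) ?K) + (\<alpha> + sum w I) * e"
    by (simp add: algebra_simps sum.distrib sum_distrib_right sum_distrib_left)
  finally show "set_dist d (\<lambda>c. \<alpha> * v c + (\<Sum>i\<in>I. w i * q i c)) ?K
    \<le> \<alpha> * set_dist d v ?K + (\<Sum>i\<in>I. w i * set_dist d (q i) ?K) + e"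
    using s by simp
qed

text \<open>Sums over a disjoint union of two index sets, used to treat follower and leader
  weights as one convex combination.\<close>
lemma sum_Inl_Inr:
  assumes "finite N" "finite L"
  shows "(\<Sum>i\<in>Inl ` N \<union> Inr ` L. g i) = (\<Sum>l\<in>N. g (Inl l)) + (\<Sum>l\<in>L. g (Inr l))"
  using assms by (subst sum.union_disjoint) (auto simp: sum.reindex)

text \<open>A small Euler step of the consensus dynamics (attraction towards points q_l with
  weights A_l and towards generators Y_l with weights B_l) does not increase the distance
  to the hull by more than the weighted increments of the q_l-distances.\<close>
lemma set_dist_euler_step:
  assumes k: "1 \<le> k" and N: "finite N" and L: "L \<subseteq> {1..k}"
    and A: "\<forall>l\<in>N. 0 \<le> A l" and B: "\<forall>l\<in>L. 0 \<le> B l"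
    and h: "0 \<le> h" "h * (sum A N + sum B L) \<le> 1"
  shows "set_dist d (\<lambda>c. v c + h * ((\<Sum>l\<in>N. A l * (q l c - v c)) + (\<Sum>l\<in>L. B l * (Y l c - v c))))
      (conv_pts k Y)
    \<le> set_dist d v (conv_pts k Y)
      + h * (\<Sum>l\<in>N. A l * (set_dist d (q l) (conv_pts k Y) - set_dist d v (conv_pts k Y)))"
proof -
  let ?K = "conv_pts k Y" and ?S = "sum A N + sum B L"
  define I where "I = Inl ` N \<union> Inr ` L"
  define w where "w = (\<lambda>i. case i of Inl l \<Rightarrow> h * A l | Inr l \<Rightarrow> h * B l)"
  define p where "p = (\<lambda>i. case i of Inl l \<Rightarrow> q l | Inr l \<Rightarrow> Y l)"
  have finL: "finite L" using L finite_subset by blast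
  have sumI: "(\<Sum>i\<in>I. g i) = (\<Sum>l\<in>N. g (Inl l)) + (\<Sum>l\<in>L. g (Inr l))" for g :: "_ \<Rightarrow> real"
    unfolding I_def by (rule sum_Inl_Inr[OF N finL])
  have I: "finite I" unfolding I_def using N finL by simp
  have w: "\<forall>i\<in>I. 0 \<le> w i" unfolding I_def w_def using A B h(1) by auto
  have wsum: "(1 - h * ?S) + sum w I = 1"
    unfolding sumI by (simp add: w_def sum_distrib_left algebra_simps)
  have step: "(\<lambda>c. v c + h * ((\<Sum>l\<in>N. A l * (q l c - v c)) + (\<Sum>l\<in>L. B l * (Y l c - v c))))
      = (\<lambda>c. (1 - h * ?S) * v c + (\<Sum>i\<in>I. w i * p i c))"
    unfolding sumI
    by (simp add: w_def p_def algebra_simps sum_distrib_left sum_subtractf sum_distrib_right sum.distrib)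
  define D where "D = set_dist d v ?K"
  have weighted: "(\<Sum>i\<in>I. w i * set_dist d (p i) ?K) = h * (\<Sum>l\<in>N. A l * set_dist d (q l) ?K)"
  proof -
    have "\<forall>l\<in>L. set_dist d (p (Inr l)) ?K = 0"
      using L by (auto simp: p_def set_dist_generator)
    then show ?thesis
      unfolding sumI by (simp add: w_def p_def sum_distrib_left mult.assoc)
  qed
  have increments: "(\<Sum>l\<in>N. A l * (set_dist d (q l) ?K - D)) = (\<Sum>l\<in>N. A l * set_dist d (q l) ?K) - sum A N * D"
    by (simp add: right_diff_distrib sum_subtractf sum_distrib_right)
  have "set_dist d (\<lambda>c. (1 - h * ?S) * v c + (\<Sum>i\<in>I. w i * p i c)) ?K
      \<le> (1 - h * ?S) * D + (\<Sum>i\<in>I. w i * set_dist d (p i) ?K)"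
    unfolding D_def by (rule set_dist_convex[OF k I _ w wsum]) (use h in linarith)
  also have "\<dots> = D + h * (\<Sum>l\<in>N. A l * (set_dist d (q l) ?K - D)) - h * sum B L * D"
    unfolding weighted increments by (simp add: algebra_simps)
  also have "\<dots> \<le> D + h * (\<Sum>l\<in>N. A l * (set_dist d (q l) ?K - D))"
    using h(1) B set_dist_nonneg[OF conv_nonempty[OF k]] unfolding D_def
    by (simp add: sum_nonneg)
  finally show ?thesis unfolding step D_def .
qed

section \<open>Upper right Dini derivatives and comparison principles\<close>

text \<open>The upper right Dini derivative of \<phi> at t is at most D.\<close>
definition right_dini_bound :: "(real \<Rightarrow> real) \<Rightarrow> real \<Rightarrow> real \<Rightarrow> bool" where
  "right_dini_bound \<phi> t D \<longleftrightarrow> (\<forall>e>0. \<forall>\<^sub>F h in at_right 0. \<phi> (t + h) \<le> \<phi> t + h * (D + e))"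

lemma right_dini_boundD:
  assumes "right_dini_bound \<phi> t D" and "0 < e"
  shows "\<exists>\<delta>>0. \<forall>h. 0 < h \<and> h < \<delta> \<longrightarrow> \<phi> (t + h) \<le> \<phi> t + h * (D + e)"
proof -
  have "\<forall>\<^sub>F h in at_right 0. \<phi> (t + h) \<le> \<phi> t + h * (D + e)"
    using assms unfolding right_dini_bound_def by simp
  then obtain b :: real where "0 < b" "\<forall>h>0. h < b \<longrightarrow> \<phi> (t + h) \<le> \<phi> t + h * (D + e)"
    unfolding eventually_at_right_field by auto
  then show ?thesis by (intro exI[of _ b]) auto
qed

lemma right_dini_bound_mono:
  assumes "right_dini_bound \<phi> t D" and "D \<le> D'"
  shows "right_dini_bound \<phi> t D'"
  unfolding right_dini_bound_def
proof (intro allI impI)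
  fix e :: real
  assume "0 < e"
  then have "\<forall>\<^sub>F h in at_right 0. \<phi> (t + h) \<le> \<phi> t + h * (D + e)"
    using assms(1) unfolding right_dini_bound_def by simp
  moreover note eventually_at_right_less[of "0::real"]
  ultimately show "\<forall>\<^sub>F h in at_right 0. \<phi> (t + h) \<le> \<phi> t + h * (D' + e)"
  proof eventually_elim
    case (elim h)
    then have "h * (D + e) \<le> h * (D' + e)" using assms(2) by (intro mult_left_mono) auto
    with elim show ?case by linarith
  qed
qed

lemma deriv_right_approx:
  assumes "(g has_real_derivative D) (at t)" and e: "0 < e"
  shows "\<forall>\<^sub>F h in at_right 0. \<bar>g (t + h) - g t - h * D\<bar> \<le> e * h"
proof -
  have "((\<lambda>h. (g (t + h) - g t) / h) \<longlongrightarrow> D) (at_right 0)"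
    using assms(1) unfolding DERIV_def by (rule filterlim_mono) (auto intro: at_le)
  then have "\<forall>\<^sub>F h in at_right 0. dist ((g (t + h) - g t) / h) D < e"
    using e by (simp add: tendsto_iff)
  with eventually_at_right_less[of "0::real"]
  show ?thesis
  proof (rule eventually_elim2)
    fix h :: real
    assume h: "0 < h" and close: "dist ((g (t + h) - g t) / h) D < e"
    have "g (t + h) - g t - h * D = h * ((g (t + h) - g t) / h - D)"
      using h by (simp add: field_simps)
    then show "\<bar>g (t + h) - g t - h * D\<bar> \<le> e * h"
      using h close by (simp add: abs_mult dist_real_def)
  qed
qed

lemma right_dini_bound_diff:
  assumes "right_dini_bound \<phi> t D" and "(g has_real_derivative D') (at t)"
  shows "right_dini_bound (\<lambda>s. \<phi> s - g s) t (D - D')"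
  unfolding right_dini_bound_def
proof (intro allI impI)
  fix e :: real
  assume e: "0 < e"
  have "\<forall>\<^sub>F h in at_right 0. \<phi> (t + h) \<le> \<phi> t + h * (D + e/2)"
    using assms(1) e unfolding right_dini_bound_def by simp
  moreover have "\<forall>\<^sub>F h in at_right 0. \<bar>g (t + h) - g t - h * D'\<bar> \<le> e/2 * h"
    using deriv_right_approx[OF assms(2), of "e/2"] e by simp
  moreover note eventually_at_right_less[of "0::real"]
  ultimately show "\<forall>\<^sub>F h in at_right 0. \<phi> (t + h) - g (t + h) \<le> \<phi> t - g t + h * (D - D' + e)"
  proof eventually_elim
    case (elim h)
    have "h * (D - D' + e) = h * (D + e/2) - h * D' + e/2 * h" by (simp add: algebra_simps)
    then show ?case using elim(1,2) unfolding abs_le_iff by linarith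
  qed
qed

lemma right_dini_nonincreasing_closed:
  fixes \<phi> :: "real \<Rightarrow> real"
  assumes cont: "continuous_on {p..q} \<phi>" and pq: "p \<le> q"
    and D: "\<forall>t\<in>{p..<q}. right_dini_bound \<phi> t 0"
  shows "\<phi> q \<le> \<phi> p"
proof (rule field_le_epsilon)
  fix e :: real
  assume e: "0 < e"
  define \<epsilon> where "\<epsilon> = e / (q - p + 1)"
  have \<epsilon>: "0 < \<epsilon>" using e pq by (simp add: \<epsilon>_def)
  have \<epsilon>e: "\<epsilon> * (q - p) \<le> e" using e pq unfolding \<epsilon>_def by (simp add: field_simps)
  define g where "g = (\<lambda>s. \<phi> s - \<phi> p - \<epsilon> * (s - p))"
  define S where "S = {p..q} \<inter> g -` {..0}"
  have "continuous_on {p..q} g" unfolding g_def by (intro continuous_intros cont)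
  then have cS: "closed S" unfolding S_def by (rule continuous_closed_preimage) auto
  have pS: "p \<in> S" using pq by (simp add: S_def g_def)
  have bS: "bdd_above S" unfolding S_def by (rule bdd_aboveI[of _ q]) auto
  define s where "s = Sup S"
  have sS: "s \<in> S" unfolding s_def by (rule closed_contains_Sup) (use pS bS cS in auto)
  have "s = q"
  proof (rule ccontr)
    assume "s \<noteq> q"
    then have sq: "s < q" and "s \<in> {p..<q}" using sS by (auto simp: S_def)
    then have "right_dini_bound \<phi> s 0" using D by blast
    from right_dini_boundD[OF this \<epsilon>] obtain \<delta>
      where \<delta>: "\<delta> > 0" "\<forall>h. 0 < h \<and> h < \<delta> \<longrightarrow> \<phi> (s + h) \<le> \<phi> s + h * (0 + \<epsilon>)"
      by blast
    define h where "h = min (\<delta>/2) (q - s)"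
    have h: "0 < h" "h < \<delta>" "s + h \<le> q" using \<delta> sq by (auto simp: h_def)
    have "g (s + h) \<le> g s" using \<delta>(2) h by (force simp: g_def algebra_simps)
    then have "s + h \<in> S" using sS h by (simp add: S_def)
    then have "s + h \<le> s" unfolding s_def by (rule cSup_upper[OF _ bS])
    then show False using h by simp
  qed
  then have "g q \<le> 0" using sS by (simp add: S_def)
  then show "\<phi> q \<le> \<phi> p + e" using \<epsilon>e by (simp add: g_def)
qed

text \<open>The same on the open interval (p,q), using continuity at p.\<close>
lemma right_dini_nonincreasing_open:
  fixes \<phi> :: "real \<Rightarrow> real"
  assumes cont: "continuous_on {p..q} \<phi>" and pq: "p \<le> q"
    and D: "\<forall>t\<in>{p<..<q}. right_dini_bound \<phi> t 0"
  shows "\<phi> q \<le> \<phi> p"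
proof (cases "p = q")
  case False
  then have pq': "p < q" using pq by simp
  have le: "\<phi> q \<le> \<phi> p'" if "p < p'" "p' < q" for p'
    by (rule right_dini_nonincreasing_closed) (use that cont D in \<open>auto intro: continuous_on_subset\<close>)
  show ?thesis
  proof (rule field_le_epsilon)
    fix e :: real
    assume e: "0 < e"
    obtain \<delta> where \<delta>: "\<delta> > 0" "\<forall>x'\<in>{p..q}. dist x' p < \<delta> \<longrightarrow> dist (\<phi> x') (\<phi> p) < e"
      using cont pq e unfolding continuous_on_iff by (meson atLeastAtMost_iff order_refl)
    define p' where "p' = p + min (\<delta>/2) ((q - p)/2)"
    have "0 < min (\<delta>/2) ((q - p)/2)" "min (\<delta>/2) ((q - p)/2) < \<delta>" "min (\<delta>/2) ((q - p)/2) < q - p"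
      using \<delta>(1) pq' by (auto simp: min_less_iff_disj)
    then have p': "p < p'" "p' < q" "dist p' p < \<delta>"
      unfolding p'_def dist_real_def by auto
    have "\<phi> p' < \<phi> p + e" using \<delta>(2)[rule_format, of p'] p' by (auto simp: dist_real_def)
    then show "\<phi> q \<le> \<phi> p + e" using le[OF p'(1,2)] by simp
  qed
qed simp

lemma right_dini_nonincreasing:
  fixes \<phi> :: "real \<Rightarrow> real"
  assumes "finite F" and "continuous_on {p..q} \<phi>" and "p \<le> q"
    and "\<forall>t\<in>{p<..<q} - F. right_dini_bound \<phi> t 0"
  shows "\<phi> q \<le> \<phi> p"
  using assms
proof (induction F arbitrary: p q rule: finite_induct)
  case empty
  then show ?case using right_dini_nonincreasing_open by simp
next
  case (insert f F)
  show ?case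
  proof (cases "f \<in> {p<..<q}")
    case True
    have "\<phi> q \<le> \<phi> f"
      by (rule insert.IH) (use insert.prems True in \<open>auto intro: continuous_on_subset\<close>)
    moreover have "\<phi> f \<le> \<phi> p"
      by (rule insert.IH) (use insert.prems True in \<open>auto intro: continuous_on_subset\<close>)
    ultimately show ?thesis by simp
  next
    case False
    show ?thesis by (rule insert.IH) (use insert.prems False in auto)
  qed
qed

lemma right_dini_linear_growth:
  fixes \<phi> :: "real \<Rightarrow> real"
  assumes F: "finite F" and cont: "continuous_on {p..q} \<phi>" and pq: "p \<le> q"
    and D: "\<forall>t\<in>{p<..<q} - F. right_dini_bound \<phi> t D"
  shows "\<phi> q \<le> \<phi> p + D * (q - p)"
proof -
  have "(\<lambda>s. \<phi> s - D * (s - p)) q \<le> (\<lambda>s. \<phi> s - D * (s - p)) p"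
  proof (rule right_dini_nonincreasing[OF F _ pq])
    show "continuous_on {p..q} (\<lambda>s. \<phi> s - D * (s - p))" by (intro continuous_intros cont)
    have "right_dini_bound (\<lambda>s. \<phi> s - D * (s - p)) t (D - D)" if "t \<in> {p<..<q} - F" for t
      using D that by (intro right_dini_bound_diff) (auto intro!: derivative_eq_intros)
    then show "\<forall>t\<in>{p<..<q} - F. right_dini_bound (\<lambda>s. \<phi> s - D * (s - p)) t 0" by simp
  qed
  then show ?thesis by simp
qed

lemma right_dini_comparison:
  fixes \<phi> :: "real \<Rightarrow> real"
  assumes F: "finite F" and cont: "continuous_on {p..q} \<phi>" and pq: "p \<le> q" and p0: "\<phi> p \<le> 0"
    and D: "\<forall>t\<in>{p<..<q} - F. 0 < \<phi> t \<longrightarrow> right_dini_bound \<phi> t 0"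
  shows "\<phi> q \<le> 0"
proof (rule ccontr)
  assume qpos: "\<not> \<phi> q \<le> 0"
  define S where "S = {p..q} \<inter> \<phi> -` {..0}"
  have cS: "closed S" unfolding S_def by (rule continuous_closed_preimage[OF cont]) auto
  have pS: "p \<in> S" using pq p0 by (simp add: S_def)
  have bS: "bdd_above S" unfolding S_def by (rule bdd_aboveI[of _ q]) auto
  define s where "s = Sup S"
  have sS: "s \<in> S" unfolding s_def by (rule closed_contains_Sup) (use pS bS cS in auto)
  have pos: "0 < \<phi> r" if "s < r" "r \<le> q" for r
  proof (rule ccontr)
    assume "\<not> 0 < \<phi> r"
    then have "r \<in> S" using that sS by (auto simp: S_def)
    then have "r \<le> s" unfolding s_def by (rule cSup_upper[OF _ bS])
    then show False using that by simp
  qed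
  have "\<phi> q \<le> \<phi> s"
    by (rule right_dini_nonincreasing[OF F])
      (use sS cont D pos in \<open>auto intro: continuous_on_subset simp: S_def\<close>)
  then show False using sS qpos by (simp add: S_def)
qed

lemma right_dini_bound_Max:
  fixes g :: "'i \<Rightarrow> real \<Rightarrow> real"
  assumes I: "finite I" "I \<noteq> {}" and D: "0 \<le> D"
    and cont: "\<forall>i\<in>I. continuous (at_right t) (g i)"
    and top: "\<forall>i\<in>I. g i t = Max ((\<lambda>i. g i t) ` I) \<longrightarrow> right_dini_bound (g i) t D"
  shows "right_dini_bound (\<lambda>s. Max ((\<lambda>i. g i s) ` I)) t D"
  unfolding right_dini_bound_def
proof (intro allI impI)
  fix e :: real
  assume e: "0 < e"
  let ?M = "Max ((\<lambda>i. g i t) ` I)"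
  have "\<forall>\<^sub>F h in at_right 0. g i (t + h) \<le> ?M + h * (D + e)" if i: "i \<in> I" for i
  proof (cases "g i t = ?M")
    case True
    then have "right_dini_bound (g i) t D" using top i by blast
    then show ?thesis using e unfolding right_dini_bound_def True[symmetric] by simp
  next
    case False
    then have below: "g i t < ?M" using I i by (simp add: order_less_le)
    have "(g i \<longlongrightarrow> g i t) (at_right t)" using cont i by (simp add: continuous_within)
    from order_tendstoD(2)[OF this below] have "\<forall>\<^sub>F s in at_right t. g i s < ?M" .
    then have "\<forall>\<^sub>F h in at_right 0. g i (h + t) < ?M"
      by (simp only: eventually_at_right_to_0[of _ t])
    moreover note eventually_at_right_less[of "0::real"]
    ultimately show ?thesis
    proof eventually_elim
      case (elim h)
      have "0 \<le> h * (D + e)" using elim(2) D e by simp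
      then show ?case using elim(1) by (simp add: add.commute)
    qed
  qed
  then have "\<forall>\<^sub>F h in at_right 0. \<forall>i\<in>I. g i (t + h) \<le> ?M + h * (D + e)"
    by (simp add: eventually_ball_finite_distrib[OF I(1)])
  then show "\<forall>\<^sub>F h in at_right 0. Max ((\<lambda>i. g i (t + h)) ` I) \<le> ?M + h * (D + e)"
  proof eventually_elim
    case (elim h)
    then show ?case using I by (simp add: Max_le_iff)
  qed
qed

lemma continuous_on_Max:
  fixes g :: "'i \<Rightarrow> real \<Rightarrow> real"
  assumes "finite I" "I \<noteq> {}" and "\<forall>i\<in>I. continuous_on S (g i)"
  shows "continuous_on S (\<lambda>t. Max ((\<lambda>i. g i t) ` I))"
  using assms
proof (induction I rule: finite_ne_induct)
  case (insert i I)
  then show ?case by (simp add: continuous_on_max)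
qed simp

section \<open>The follower dynamics\<close>

lemma vec_deriv_right_approx:
  assumes D: "\<forall>c<d. ((\<lambda>s. g s c) has_real_derivative V c) (at t)" and e: "0 < e"
  shows "\<forall>\<^sub>F h in at_right 0. eucl d (\<lambda>c. g (t + h) c - g t c - h * V c) \<le> e * h"
proof (cases "d = 0")
  case True
  show ?thesis
    using eventually_at_right_less[of "0::real"]
    by (rule eventually_mono) (use e True in \<open>simp add: eucl_def\<close>)
next
  case False
  have "\<forall>c\<in>{..<d}. \<forall>\<^sub>F h in at_right 0. \<bar>g (t + h) c - g t c - h * V c\<bar> \<le> e / d * h"
  proof
    fix c
    assume "c \<in> {..<d}"
    then have "((\<lambda>s. g s c) has_real_derivative V c) (at t)" using D by simp
    moreover have "0 < e / d" using e False by simp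
    ultimately show "\<forall>\<^sub>F h in at_right 0. \<bar>g (t + h) c - g t c - h * V c\<bar> \<le> e / d * h"
      by (rule deriv_right_approx)
  qed
  then have "\<forall>\<^sub>F h in at_right 0. \<forall>c\<in>{..<d}. \<bar>g (t + h) c - g t c - h * V c\<bar> \<le> e / d * h"
    by (simp add: eventually_ball_finite_distrib)
  then show ?thesis
  proof eventually_elim
    case (elim h)
    have "eucl d (\<lambda>c. g (t + h) c - g t c - h * V c) \<le> (\<Sum>c<d. \<bar>g (t + h) c - g t c - h * V c\<bar>)"
      by (rule eucl_le_sum_abs)
    also have "\<dots> \<le> (\<Sum>c<d. e / d * h)" by (rule sum_mono) (use elim in auto)
    also have "\<dots> = e * h" using False by simp
    finally show ?case .
  qed
qed

lemma input_le_znorm: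
  shows W_le_znorm: "j \<in> {1..n} \<Longrightarrow> eucl d (W j t) \<le> znorm n k d U W y t"
    and U_le_znorm: "l \<in> {1..k} \<Longrightarrow> eucl d (U l (st k y t) t) \<le> znorm n k d U W y t"
proof -
  let ?SU = "\<Sum>i=1..k. (eucl d (U i (st k y t) t))\<^sup>2" and ?SW = "\<Sum>i=1..n. (eucl d (W i t))\<^sup>2"
  show "eucl d (W j t) \<le> znorm n k d U W y t" if "j \<in> {1..n}"
  proof -
    have "(eucl d (W j t))\<^sup>2 \<le> ?SW" by (rule member_le_sum) (use that in auto)
    then have "(eucl d (W j t))\<^sup>2 \<le> ?SU + ?SW" by (simp add: sum_nonneg add_increasing add_increasing2)
    then show ?thesis unfolding znorm_def by (rule real_le_rsqrt)
  qed
  show "eucl d (U l (st k y t) t) \<le> znorm n k d U W y t" if "l \<in> {1..k}"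
  proof -
    have "(eucl d (U l (st k y t) t))\<^sup>2 \<le> ?SU" by (rule member_le_sum) (use that in auto)
    then have "(eucl d (U l (st k y t) t))\<^sup>2 \<le> ?SU + ?SW" by (simp add: sum_nonneg add_increasing add_increasing2)
    then show ?thesis unfolding znorm_def by (rule real_le_rsqrt)
  qed
qed

locale follower_system =
  fixes n k d :: nat and a_lo a_hi Z :: real and \<sigma> :: "real \<Rightarrow> digraph"
    and a b :: "nat \<Rightarrow> nat \<Rightarrow> state \<Rightarrow> state \<Rightarrow> real \<Rightarrow> real"
    and U :: "nat \<Rightarrow> state \<Rightarrow> real \<Rightarrow> pt" and W :: "nat \<Rightarrow> real \<Rightarrow> pt"
    and x y :: "nat \<Rightarrow> real \<Rightarrow> pt" and E :: "real set"
  assumes n_pos: "1 \<le> n" and k_pos: "1 \<le> k" and a_lo_pos: "0 < a_lo"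
    and a_bounds: "\<forall>i\<in>{1..n}. \<forall>j\<in>{1..n}. \<forall>X Y t. a_lo \<le> a i j X Y t \<and> a i j X Y t \<le> a_hi"
    and b_nonneg: "\<forall>i\<in>{1..n}. \<forall>j\<in>{1..k}. \<forall>X Y t. 0 \<le> b i j X Y t"
    and Z_bound: "\<forall>t\<ge>0. znorm n k d U W y t \<le> Z"
    and E_finite: "\<forall>T. finite (E \<inter> {0..T})"
    and x_cont: "\<forall>c<d. \<forall>i\<in>{1..n}. continuous_on {0..} (\<lambda>s. x i s c)"
    and y_cont: "\<forall>c<d. \<forall>i\<in>{1..k}. continuous_on {0..} (\<lambda>s. y i s c)"
    and ode: "\<forall>t. t > 0 \<and> t \<notin> E \<longrightarrow> (\<forall>c<d.
           (\<forall>i\<in>{1..k}. ((\<lambda>s. y i s c) has_real_derivative U i (st k y t) t c) (at t))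
         \<and> (\<forall>i\<in>{1..n}. ((\<lambda>s. x i s c) has_real_derivative
               (\<Sum>j\<in>Nset n \<sigma> i t. a i j (st n x t) (st k y t) t * (x j t c - x i t c))
             + (\<Sum>j\<in>Lset k \<sigma> i t. b i j (st n x t) (st k y t) t * (y j t c - x i t c))
             + W i t c) (at t)))"
begin

abbreviation dist_hull :: "nat \<Rightarrow> real \<Rightarrow> real" where
  "dist_hull j t \<equiv> fdist k d x y j t"

abbreviation dist_max :: "real \<Rightarrow> real" where
  "dist_max t \<equiv> hdist n k d x y t"

abbreviation drift :: "nat \<Rightarrow> real \<Rightarrow> real" where
  "drift j t \<equiv> \<Sum>l\<in>Nset n \<sigma> j t. a j l (st n x t) (st k y t) t * (dist_hull l t - dist_hull j t)"

lemma a_hi_pos: "0 < a_hi"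
  using a_bounds n_pos a_lo_pos by (meson atLeastAtMost_iff le_refl less_le_trans order_trans)

lemma a_nonneg: "i \<in> {1..n} \<Longrightarrow> j \<in> {1..n} \<Longrightarrow> 0 \<le> a i j X Y t"
  using a_bounds a_lo_pos by (meson less_le_trans less_imp_le)

lemma Z_nonneg: "0 \<le> Z"
proof -
  have "0 \<le> znorm n k d U W y 0" unfolding znorm_def by (simp add: sum_nonneg)
  then show ?thesis using Z_bound by force
qed

lemma W_le_Z: "j \<in> {1..n} \<Longrightarrow> 0 \<le> t \<Longrightarrow> eucl d (W j t) \<le> Z"
  by (rule order_trans[OF W_le_znorm]) (use Z_bound in auto)

lemma U_le_Z: "l \<in> {1..k} \<Longrightarrow> 0 \<le> t \<Longrightarrow> eucl d (U l (st k y t) t) \<le> Z"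
  by (rule order_trans[OF U_le_znorm]) (use Z_bound in auto)

lemma dist_hull_nonneg: "0 \<le> dist_hull j t"
  unfolding fdist_def by (rule set_dist_nonneg[OF conv_nonempty[OF k_pos]])

lemma dist_hull_le_max: "j \<in> {1..n} \<Longrightarrow> dist_hull j t \<le> dist_max t"
  unfolding hdist_def by (rule Max_ge) auto

lemma dist_max_nonneg: "0 \<le> dist_max t"
  using dist_hull_le_max[of 1 t] dist_hull_nonneg[of 1 t] n_pos by simp

lemma leader_state: "l \<in> {1..k} \<Longrightarrow> st k y t l = y l t"
  by (simp add: st_def)

lemma dist_hull_lipschitz:
  "\<bar>dist_hull j t' - dist_hull j t\<bar>
    \<le> (\<Sum>c<d. \<bar>x j t' c - x j t c\<bar>) + (\<Sum>l\<in>{1..k}. \<Sum>c<d. \<bar>y l t' c - y l t c\<bar>)"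
proof -
  have one_side: "dist_hull j s' \<le> dist_hull j s
      + ((\<Sum>c<d. \<bar>x j s' c - x j s c\<bar>) + (\<Sum>l\<in>{1..k}. \<Sum>c<d. \<bar>y l s' c - y l s c\<bar>))" for s s'
  proof -
    let ?G = "\<Sum>l\<in>{1..k}. \<Sum>c<d. \<bar>y l s' c - y l s c\<bar>"
    have "\<forall>l\<in>{1..k}. eucl d (\<lambda>c. st k y s' l c - st k y s l c) \<le> ?G"
    proof
      fix l
      assume l: "l \<in> {1..k}"
      have "eucl d (\<lambda>c. st k y s' l c - st k y s l c) \<le> (\<Sum>c<d. \<bar>y l s' c - y l s c\<bar>)"
        using eucl_le_sum_abs[of d "\<lambda>c. y l s' c - y l s c"] l by (simp add: leader_state)
      also have "\<dots> \<le> ?G" by (rule member_le_sum) (use l in \<open>auto intro: sum_nonneg\<close>)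
      finally show "eucl d (\<lambda>c. st k y s' l c - st k y s l c) \<le> ?G" .
    qed
    from set_dist_perturb[OF k_pos this, of "x j s'" "x j s"]
    have "dist_hull j s' \<le> dist_hull j s + eucl d (\<lambda>c. x j s' c - x j s c) + ?G"
      unfolding fdist_def .
    then show ?thesis using eucl_le_sum_abs[of d "\<lambda>c. x j s' c - x j s c"] by linarith
  qed
  have "(\<Sum>c<d. \<bar>x j t c - x j t' c\<bar>) = (\<Sum>c<d. \<bar>x j t' c - x j t c\<bar>)"
    "(\<Sum>l\<in>{1..k}. \<Sum>c<d. \<bar>y l t c - y l t' c\<bar>) = (\<Sum>l\<in>{1..k}. \<Sum>c<d. \<bar>y l t' c - y l t c\<bar>)"
    by (simp_all add: abs_minus_commute)
  then show ?thesis using one_side[of t' t] one_side[of t t'] by linarith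
qed

lemma dist_hull_cont:
  assumes j: "j \<in> {1..n}"
  shows "continuous_on {0..} (dist_hull j)"
  unfolding continuous_on_iff
proof (intro ballI allI impI)
  fix t \<epsilon> :: real
  assume t: "t \<in> {0..}" and \<epsilon>: "0 < \<epsilon>"
  define G where "G = (\<lambda>t'. (\<Sum>c<d. \<bar>x j t' c - x j t c\<bar>) + (\<Sum>l\<in>{1..k}. \<Sum>c<d. \<bar>y l t' c - y l t c\<bar>))"
  have "continuous_on {0..} G"
    unfolding G_def using x_cont y_cont j by (intro continuous_intros) auto
  then obtain \<delta> where \<delta>: "\<delta> > 0" "\<forall>t'\<in>{0..}. dist t' t < \<delta> \<longrightarrow> dist (G t') (G t) < \<epsilon>"
    using t \<epsilon> unfolding continuous_on_iff by blast
  show "\<exists>\<delta>>0. \<forall>t'\<in>{0..}. dist t' t < \<delta> \<longrightarrow> dist (dist_hull j t') (dist_hull j t) < \<epsilon>"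
  proof (intro exI[of _ \<delta>] conjI ballI impI)
    fix t' :: real
    assume "t' \<in> {0..}" "dist t' t < \<delta>"
    then have "dist (G t') (G t) < \<epsilon>" using \<delta> by blast
    moreover have "G t = 0" by (simp add: G_def)
    moreover have "\<bar>dist_hull j t' - dist_hull j t\<bar> \<le> G t'"
      unfolding G_def by (rule dist_hull_lipschitz)
    ultimately show "dist (dist_hull j t') (dist_hull j t) < \<epsilon>" by (simp add: dist_real_def)
  qed (use \<delta> in auto)
qed

lemma dist_max_cont: "continuous_on {0..} dist_max"
  unfolding hdist_def by (rule continuous_on_Max) (use n_pos dist_hull_cont in auto)


lemma leader_displacement:
  assumes l: "l \<in> {1..k}" and t: "0 \<le> t" and h: "0 \<le> h"
    and err: "eucl d (\<lambda>c. y l (t + h) c - y l t c - h * U l (st k y t) t c) \<le> \<epsilon> * h"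
  shows "eucl d (\<lambda>c. st k y (t + h) l c - st k y t l c) \<le> h * Z + \<epsilon> * h"
proof -
  let ?u = "U l (st k y t) t"
  have "eucl d (\<lambda>c. y l (t + h) c - y l t c)
      \<le> eucl d (\<lambda>c. y l (t + h) c - y l t c - h * ?u c) + eucl d (\<lambda>c. h * ?u c)"
    using eucl_triangle[of d "\<lambda>c. y l (t + h) c - y l t c - h * ?u c" "\<lambda>c. h * ?u c"] by simp
  moreover have "eucl d (\<lambda>c. h * ?u c) \<le> h * Z"
    using h U_le_Z[OF l t] by (simp add: eucl_scale mult_left_mono)
  ultimately show ?thesis using err l by (simp add: leader_state)
qed

lemma dist_hull_step:
  fixes j :: nat and t h \<epsilon> :: real
  defines "N \<equiv> Nset n \<sigma> j t" and "L \<equiv> Lset k \<sigma> j t"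
    and "A \<equiv> \<lambda>l. a j l (st n x t) (st k y t) t" and "B \<equiv> \<lambda>l. b j l (st n x t) (st k y t) t"
    and "V \<equiv> \<lambda>c. (\<Sum>l\<in>Nset n \<sigma> j t. a j l (st n x t) (st k y t) t * (x l t c - x j t c))
      + (\<Sum>l\<in>Lset k \<sigma> j t. b j l (st n x t) (st k y t) t * (y l t c - x j t c)) + W j t c"
  assumes j: "j \<in> {1..n}" and t: "0 \<le> t" and h: "0 < h" "h * (sum A N + sum B L) \<le> 1"
    and x_err: "eucl d (\<lambda>c. x j (t + h) c - x j t c - h * V c) \<le> \<epsilon> * h"
    and y_err: "\<forall>l\<in>{1..k}. eucl d (\<lambda>c. y l (t + h) c - y l t c - h * U l (st k y t) t c) \<le> \<epsilon> * h"
  shows "dist_hull j (t + h) \<le> dist_hull j t + h * (drift j t + 2 * Z + 2 * \<epsilon>)"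
proof -
  let ?Y = "st k y t" and ?K = "conv_pts k (st k y t)"
  have N: "finite N" "N \<subseteq> {1..n}" and L: "L \<subseteq> {1..k}"
    unfolding N_def L_def Nset_def Lset_def by auto
  have A: "\<forall>l\<in>N. 0 \<le> A l" using N(2) j a_nonneg unfolding A_def by blast
  have B: "\<forall>l\<in>L. 0 \<le> B l" using L j b_nonneg unfolding B_def by blast
  have leader_moves: "\<forall>l\<in>{1..k}. eucl d (\<lambda>c. st k y (t + h) l c - ?Y l c) \<le> h * Z + \<epsilon> * h"
    using leader_displacement[OF _ t less_imp_le[OF h(1)]] y_err by blast
  define w where "w = (\<lambda>c. x j t c + h * ((\<Sum>l\<in>N. A l * (x l t c - x j t c))
      + (\<Sum>l\<in>L. B l * (?Y l c - x j t c))))"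
  have "(\<lambda>c. x j (t + h) c - w c) = (\<lambda>c. (x j (t + h) c - x j t c - h * V c) + h * W j t c)"
  proof
    fix c
    have "(\<Sum>l\<in>L. B l * (?Y l c - x j t c)) = (\<Sum>l\<in>L. B l * (y l t c - x j t c))"
      using L by (intro sum.cong) (auto simp: leader_state)
    then show "x j (t + h) c - w c = (x j (t + h) c - x j t c - h * V c) + h * W j t c"
      unfolding w_def V_def N_def L_def A_def B_def by (simp add: algebra_simps)
  qed
  moreover have "eucl d (\<lambda>c. h * W j t c) \<le> h * Z"
    using h(1) W_le_Z[OF j t] by (simp add: eucl_scale)
  ultimately have follower_error: "eucl d (\<lambda>c. x j (t + h) c - w c) \<le> \<epsilon> * h + h * Z"
    using eucl_triangle[of d "\<lambda>c. x j (t + h) c - x j t c - h * V c" "\<lambda>c. h * W j t c"] x_err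
    by simp
  have "dist_hull j (t + h) \<le> set_dist d w ?K + eucl d (\<lambda>c. x j (t + h) c - w c) + (h * Z + \<epsilon> * h)"
    unfolding fdist_def by (rule set_dist_perturb[OF k_pos leader_moves])
  moreover have "set_dist d w ?K \<le> dist_hull j t + h * (\<Sum>l\<in>N. A l * (dist_hull l t - dist_hull j t))"
    unfolding w_def fdist_def
    by (rule set_dist_euler_step[OF k_pos N(1) L A B less_imp_le[OF h(1)] h(2)])
  moreover have "(\<Sum>l\<in>N. A l * (dist_hull l t - dist_hull j t)) = drift j t"
    by (simp add: A_def N_def)
  ultimately show ?thesis using follower_error by (simp add: algebra_simps)
qed

lemma dist_hull_dini:
  assumes t: "0 < t" "t \<notin> E" and j: "j \<in> {1..n}"
  shows "right_dini_bound (dist_hull j) t (drift j t + 2 * Z)"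
  unfolding right_dini_bound_def
proof (intro allI impI)
  fix e :: real
  assume e: "0 < e"
  define N where "N = Nset n \<sigma> j t"
  define L where "L = Lset k \<sigma> j t"
  define A where "A = (\<lambda>l. a j l (st n x t) (st k y t) t)"
  define B where "B = (\<lambda>l. b j l (st n x t) (st k y t) t)"
  define V where "V = (\<lambda>c. (\<Sum>l\<in>N. A l * (x l t c - x j t c)) + (\<Sum>l\<in>L. B l * (y l t c - x j t c))
      + W j t c)"
  have e2: "0 < e / 2" using e by simp
  have "\<forall>c<d. ((\<lambda>s. x j s c) has_real_derivative V c) (at t)"
    using ode t j unfolding V_def N_def L_def A_def B_def by blast
  from vec_deriv_right_approx[OF this e2]
  have "\<forall>\<^sub>F h in at_right 0. eucl d (\<lambda>c. x j (t + h) c - x j t c - h * V c) \<le> e / 2 * h" .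
  moreover have "\<forall>\<^sub>F h in at_right 0. \<forall>l\<in>{1..k}.
      eucl d (\<lambda>c. y l (t + h) c - y l t c - h * U l (st k y t) t c) \<le> e / 2 * h"
  proof -
    have "\<forall>l\<in>{1..k}. \<forall>\<^sub>F h in at_right 0.
        eucl d (\<lambda>c. y l (t + h) c - y l t c - h * U l (st k y t) t c) \<le> e / 2 * h"
      using ode t by (intro ballI vec_deriv_right_approx[OF _ e2]) auto
    then show ?thesis by (simp add: eventually_ball_finite_distrib)
  qed
  moreover have "((\<lambda>h. h * (sum A N + sum B L)) \<longlongrightarrow> 0 * (sum A N + sum B L)) (at_right 0)"
    by (intro tendsto_intros)
  then have "\<forall>\<^sub>F h in at_right 0. h * (sum A N + sum B L) < 1"
    by (rule order_tendstoD(2)) simp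
  moreover note eventually_at_right_less[of "0::real"]
  ultimately show "\<forall>\<^sub>F h in at_right 0. dist_hull j (t + h) \<le> dist_hull j t + h * (drift j t + 2 * Z + e)"
  proof eventually_elim
    case (elim h)
    have "dist_hull j (t + h) \<le> dist_hull j t + h * (drift j t + 2 * Z + 2 * (e / 2))"
      using j t(1) elim unfolding N_def L_def A_def B_def V_def
      by (intro dist_hull_step) auto
    then show ?case by simp
  qed
qed

lemma weighted_increments_le:
  assumes m: "m \<in> {1..n}" and J: "J \<subseteq> {1..n}" and M: "\<forall>l\<in>{1..n}. dist_hull l s \<le> M"
  shows "(\<Sum>l\<in>J. a m l X Y s * (dist_hull l s - dist_hull m s)) \<le> n * a_hi * (M - dist_hull m s)"
proof -
  have gap: "0 \<le> M - dist_hull m s" using M m by auto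
  have "(\<Sum>l\<in>J. a m l X Y s * (dist_hull l s - dist_hull m s)) \<le> (\<Sum>l\<in>J. a_hi * (M - dist_hull m s))"
  proof (rule sum_mono)
    fix l
    assume "l \<in> J"
    then have l: "l \<in> {1..n}" using J by auto
    have "a m l X Y s * (dist_hull l s - dist_hull m s) \<le> a m l X Y s * (M - dist_hull m s)"
      using a_nonneg[OF m l] M l by (intro mult_left_mono) auto
    also have "\<dots> \<le> a_hi * (M - dist_hull m s)"
      using a_bounds m l gap by (intro mult_right_mono) auto
    finally show "a m l X Y s * (dist_hull l s - dist_hull m s) \<le> a_hi * (M - dist_hull m s)" .
  qed
  also have "\<dots> = card J * (a_hi * (M - dist_hull m s))" by simp
  also have "\<dots> \<le> n * (a_hi * (M - dist_hull m s))"
  proof (rule mult_right_mono)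
    show "real (card J) \<le> real n" using card_mono[OF _ J] by simp
    show "0 \<le> a_hi * (M - dist_hull m s)" using a_hi_pos gap by simp
  qed
  finally show ?thesis by (simp add: algebra_simps)
qed

lemma drift_le:
  assumes "m \<in> {1..n}" and "\<forall>l\<in>{1..n}. dist_hull l s \<le> M"
  shows "drift m s \<le> n * a_hi * (M - dist_hull m s)"
  using assms by (intro weighted_increments_le) (auto simp: Nset_def)

lemma drift_le_arc:
  assumes m: "m \<in> {1..n}" and M: "\<forall>l\<in>{1..n}. dist_hull l s \<le> M"
    and arc: "i \<in> Nset n \<sigma> m s" and closer: "dist_hull i s \<le> dist_hull m s"
  shows "drift m s \<le> a_lo * (dist_hull i s - dist_hull m s) + n * a_hi * (M - dist_hull m s)"
proof -
  let ?A = "\<lambda>l. a m l (st n x s) (st k y s) s"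
  have N: "finite (Nset n \<sigma> m s)" "Nset n \<sigma> m s \<subseteq> {1..n}" by (auto simp: Nset_def)
  have i: "i \<in> {1..n}" using arc N(2) by auto
  have "drift m s = ?A i * (dist_hull i s - dist_hull m s)
      + (\<Sum>l\<in>Nset n \<sigma> m s - {i}. ?A l * (dist_hull l s - dist_hull m s))"
    by (rule sum.remove[OF N(1) arc])
  moreover have "?A i * (dist_hull i s - dist_hull m s) \<le> a_lo * (dist_hull i s - dist_hull m s)"
    using a_bounds m i closer by (intro mult_right_mono_neg) auto
  moreover have "(\<Sum>l\<in>Nset n \<sigma> m s - {i}. ?A l * (dist_hull l s - dist_hull m s))
      \<le> n * a_hi * (M - dist_hull m s)"
    by (rule weighted_increments_le[OF m _ M]) (use N in auto)
  ultimately show ?thesis by linarith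
qed

lemma dist_max_growth:
  assumes t0: "0 \<le> t0" and t: "t0 \<le> t"
  shows "dist_max t \<le> dist_max t0 + 2 * Z * (t - t0)"
proof (rule right_dini_linear_growth[where F = "E \<inter> {0..t}"])
  show "finite (E \<inter> {0..t})" using E_finite by blast
  show "continuous_on {t0..t} dist_max"
    by (rule continuous_on_subset[OF dist_max_cont]) (use t0 in auto)
  show "\<forall>s\<in>{t0<..<t} - E \<inter> {0..t}. right_dini_bound dist_max s (2 * Z)"
  proof
    fix s
    assume s: "s \<in> {t0<..<t} - E \<inter> {0..t}"
    then have s_pos: "0 < s" "s \<notin> E" using t0 by auto
    show "right_dini_bound dist_max s (2 * Z)"
      unfolding hdist_def
    proof (rule right_dini_bound_Max)
      show "\<forall>j\<in>{1..n}. continuous (at_right s) (dist_hull j)"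
      proof
        fix j
        assume "j \<in> {1..n}"
        then have "continuous_on {0..} (dist_hull j)" by (rule dist_hull_cont)
        then have "continuous (at s within {0..}) (dist_hull j)"
          using s_pos by (simp add: continuous_on_eq_continuous_within)
        then show "continuous (at_right s) (dist_hull j)"
          by (rule continuous_within_subset) (use s_pos in auto)
      qed
      show "\<forall>j\<in>{1..n}. dist_hull j s = Max ((\<lambda>j. dist_hull j s) ` {1..n})
          \<longrightarrow> right_dini_bound (dist_hull j) s (2 * Z)"
      proof (intro ballI impI)
        fix j
        assume j: "j \<in> {1..n}" and top: "dist_hull j s = Max ((\<lambda>j. dist_hull j s) ` {1..n})"
        have "drift j s \<le> n * a_hi * (dist_max s - dist_hull j s)"
          by (rule drift_le[OF j]) (use dist_hull_le_max in blast)
        then have "drift j s + 2 * Z \<le> 2 * Z" using top by (simp add: hdist_def)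
        then show "right_dini_bound (dist_hull j) s (2 * Z)"
          by (rule right_dini_bound_mono[OF dist_hull_dini[OF s_pos j]])
      qed
    qed (use n_pos Z_nonneg in auto)
  qed
qed fact

lemma dist_hull_comparison:
  assumes p: "0 \<le> p" "p \<le> q" and m: "m \<in> {1..n}"
    and H_deriv: "\<forall>s\<in>{p<..<q}. (H has_real_derivative H' s) (at s)"
    and H_cont: "continuous_on {p..q} H"
    and init: "dist_hull m p \<le> H p"
    and super: "\<forall>s\<in>{p<..<q}. s \<notin> E \<longrightarrow> H s < dist_hull m s \<longrightarrow> drift m s + 2 * Z \<le> H' s"
  shows "dist_hull m q \<le> H q"
proof -
  have "(\<lambda>s. dist_hull m s - H s) q \<le> 0"
  proof (rule right_dini_comparison[where F = "E \<inter> {0..q}" and p = p and \<phi> = "\<lambda>s. dist_hull m s - H s"])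
    show "finite (E \<inter> {0..q})" using E_finite by blast
    show "continuous_on {p..q} (\<lambda>s. dist_hull m s - H s)"
      by (intro continuous_intros H_cont continuous_on_subset[OF dist_hull_cont[OF m]]) (use p in auto)
    show "\<forall>s\<in>{p<..<q} - E \<inter> {0..q}. 0 < dist_hull m s - H s
        \<longrightarrow> right_dini_bound (\<lambda>s. dist_hull m s - H s) s 0"
    proof (intro ballI impI)
      fix s
      assume s: "s \<in> {p<..<q} - E \<inter> {0..q}" and above: "0 < dist_hull m s - H s"
      then have s_pos: "0 < s" "s \<notin> E" using p by auto
      have "right_dini_bound (\<lambda>s. dist_hull m s - H s) s (drift m s + 2 * Z - H' s)"
        using dist_hull_dini[OF s_pos m] H_deriv s by (intro right_dini_bound_diff) auto
      moreover have "drift m s + 2 * Z - H' s \<le> 0" using super s s_pos above by auto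
      ultimately show "right_dini_bound (\<lambda>s. dist_hull m s - H s) s 0"
        by (rule right_dini_bound_mono)
    qed
    show "p \<le> q" by fact
    show "dist_hull m p - H p \<le> 0" using init by simp
  qed
  then show ?thesis by simp
qed

end

section \<open>The comparison profile\<close>

definition contraction :: "real \<Rightarrow> real \<Rightarrow> real \<Rightarrow> real" where
  "contraction c \<rho> s = \<rho> + (1 - \<rho>) * exp (- c * s)"

definition recovery :: "real \<Rightarrow> real \<Rightarrow> real \<Rightarrow> real" where
  "recovery c2 g s = 1 - (1 - g) * exp (- c2 * s)"

definition decay_profile :: "real \<Rightarrow> real \<Rightarrow> real \<Rightarrow> real \<Rightarrow> real \<Rightarrow> real" where
  "decay_profile c c2 \<rho> \<tau> s =
     (if s \<le> \<tau> then contraction c \<rho> s else recovery c2 (contraction c \<rho> \<tau>) (s - \<tau>))"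

lemma contraction_strict_decreasing:
  assumes "0 < c" "\<rho> < 1" "s < s'"
  shows "contraction c \<rho> s' < contraction c \<rho> s"
proof -
  have "(1 - \<rho>) * exp (- c * s') < (1 - \<rho>) * exp (- c * s)"
    using assms by (intro mult_strict_left_mono) auto
  then show ?thesis unfolding contraction_def by simp
qed

lemma contraction_bounds:
  assumes "0 < c" "\<rho> < 1" "0 \<le> s"
  shows "\<rho> < contraction c \<rho> s" "contraction c \<rho> s \<le> 1"
proof -
  have "0 < (1 - \<rho>) * exp (- c * s)" using assms by simp
  then show "\<rho> < contraction c \<rho> s" unfolding contraction_def by simp
  show "contraction c \<rho> s \<le> 1"
    using contraction_strict_decreasing[OF assms(1,2), of 0 s] assms(3)
    by (cases "s = 0") (auto simp: contraction_def)
qed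

lemma recovery_strict_increasing:
  assumes "0 < c2" "g < 1" "s < s'"
  shows "recovery c2 g s < recovery c2 g s'"
proof -
  have "(1 - g) * exp (- c2 * s') < (1 - g) * exp (- c2 * s)"
    using assms by (intro mult_strict_left_mono) auto
  then show ?thesis unfolding recovery_def by simp
qed

lemma recovery_bounds:
  assumes "0 < c2" "g < 1" "0 \<le> s"
  shows "g \<le> recovery c2 g s" "recovery c2 g s < 1"
proof -
  show "g \<le> recovery c2 g s"
    using recovery_strict_increasing[OF assms(1,2), of 0 s] assms(3)
    by (cases "s = 0") (auto simp: recovery_def)
  have "0 < (1 - g) * exp (- c2 * s)" using assms by simp
  then show "recovery c2 g s < 1" unfolding recovery_def by simp
qed

lemma contraction_level_bounds:
  fixes c2 a \<mu> :: real
  assumes "0 < c2" "0 < a" "0 \<le> \<mu>" "\<mu> \<le> 1"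
  shows "\<mu> \<le> (c2 + a * \<mu>) / (c2 + a)" "(c2 + a * \<mu>) / (c2 + a) \<le> 1"
proof -
  have "c2 * \<mu> \<le> c2" "a * \<mu> \<le> a" using mult_left_le[of \<mu> c2] mult_left_le[of \<mu> a] assms by auto
  then show "\<mu> \<le> (c2 + a * \<mu>) / (c2 + a)" "(c2 + a * \<mu>) / (c2 + a) \<le> 1"
    using assms by (simp_all add: field_simps)
qed

lemma gain_pos:
  fixes c2 T \<gamma> :: real
  assumes "0 < c2" "0 \<le> T" "2 + 2 * c2 * T \<le> c2 * \<gamma>"
  shows "0 < \<gamma>"
proof -
  have "0 < c2 * \<gamma>" using assms by (smt (verit) mult_nonneg_nonneg)
  then show ?thesis using assms(1) by (simp add: zero_less_mult_iff)
qed

lemma decay_profile_shape: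
  fixes c c2 \<rho> \<tau> T :: real
  defines "\<xi> \<equiv> decay_profile c c2 \<rho> \<tau>"
  assumes c: "0 < c" "0 < c2" and \<rho>: "0 < \<rho>" "\<rho> < 1" and \<tau>: "0 < \<tau>" "\<tau> < T"
  shows "continuous_on {0..T} \<xi>
   \<and> (\<forall>s\<in>{0..T}. 0 < \<xi> s \<and> \<xi> s \<le> 1)
   \<and> \<xi> 0 = 1
   \<and> (\<forall>s\<in>{0..\<tau>}. \<forall>s'\<in>{0..\<tau>}. s < s' \<longrightarrow> \<xi> s' < \<xi> s)
   \<and> (\<forall>s\<in>{\<tau>..T}. \<forall>s'\<in>{\<tau>..T}. s < s' \<longrightarrow> \<xi> s < \<xi> s')
   \<and> \<xi> T < 1"
proof -
  let ?g = "contraction c \<rho> \<tau>"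
  have g: "\<rho> < ?g" "?g < 1"
    using contraction_bounds[OF c(1) \<rho>(2)] contraction_strict_decreasing[OF c(1) \<rho>(2) \<tau>(1)] \<tau>(1)
    by (auto simp: contraction_def)
  have early: "\<xi> s = contraction c \<rho> s" if "s \<le> \<tau>" for s
    using that by (simp add: \<xi>_def decay_profile_def)
  have late: "\<xi> s = recovery c2 ?g (s - \<tau>)" if "\<tau> \<le> s" for s
    using that by (cases "s = \<tau>") (auto simp: \<xi>_def decay_profile_def recovery_def)
  have "\<xi> = (\<lambda>s. contraction c \<rho> (min s \<tau>) + recovery c2 ?g (max s \<tau> - \<tau>) - ?g)"
    by (rule ext) (auto simp: \<xi>_def decay_profile_def recovery_def min_def max_def)
  then have "continuous_on {0..T} \<xi>"
    unfolding contraction_def recovery_def by (simp only:) (intro continuous_intros)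
  moreover have "\<forall>s\<in>{0..T}. 0 < \<xi> s \<and> \<xi> s \<le> 1"
  proof
    fix s
    assume s: "s \<in> {0..T}"
    show "0 < \<xi> s \<and> \<xi> s \<le> 1"
    proof (cases "s \<le> \<tau>")
      case True
      then show ?thesis using contraction_bounds[OF c(1) \<rho>(2), of s] s \<rho>(1) early by simp
    next
      case False
      then show ?thesis using recovery_bounds[OF c(2) g(2), of "s - \<tau>"] g(1) \<rho>(1) late[of s] by simp
    qed
  qed
  moreover have "\<xi> 0 = 1" using \<tau> early[of 0] by (simp add: contraction_def)
  moreover have "\<forall>s\<in>{0..\<tau>}. \<forall>s'\<in>{0..\<tau>}. s < s' \<longrightarrow> \<xi> s' < \<xi> s"
    using contraction_strict_decreasing[OF c(1) \<rho>(2)] early by auto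
  moreover have "\<forall>s\<in>{\<tau>..T}. \<forall>s'\<in>{\<tau>..T}. s < s' \<longrightarrow> \<xi> s < \<xi> s'"
    using recovery_strict_increasing[OF c(2) g(2)] late by auto
  moreover have "\<xi> T < 1" using late[of T] recovery_bounds[OF c(2) g(2), of "T - \<tau>"] \<tau> by simp
  ultimately show ?thesis by blast
qed

context follower_system
begin

lemma dist_hull_window_bound:
  assumes t0: "0 \<le> t0" and s: "t0 \<le> s" "s \<le> t0 + T" and l: "l \<in> {1..n}"
  shows "dist_hull l s \<le> dist_max t0 + 2 * Z * T"
proof -
  have "dist_hull l s \<le> dist_max s" by (rule dist_hull_le_max[OF l])
  also have "\<dots> \<le> dist_max t0 + 2 * Z * (s - t0)" by (rule dist_max_growth[OF t0 s(1)])
  also have "\<dots> \<le> dist_max t0 + 2 * Z * T" using Z_nonneg s by (intro add_left_mono mult_left_mono) auto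
  finally show ?thesis .
qed

lemma contraction_supersolution:
  fixes \<mu>0 \<gamma> d0 \<tau> T :: real
  defines "c \<equiv> n * a_hi + a_lo"
  defines "\<rho> \<equiv> (n * a_hi + a_lo * \<mu>0) / c"
  assumes t0: "0 \<le> t0" and s: "t0 \<le> s" "s < t0 + \<tau>" and \<tau>: "\<tau> \<le> T"
    and m: "m \<in> {1..n}" and arc: "i \<in> Nset n \<sigma> m s"
    and close: "dist_hull i s \<le> \<mu>0 * dist_max t0 + d0"
    and d0: "0 \<le> d0" and \<mu>0: "0 \<le> \<mu>0" "\<mu>0 \<le> 1"
    and \<gamma>: "2 + 2 * real n * a_hi * T \<le> real n * a_hi * \<gamma>"
    and above: "contraction c \<rho> (s - t0) * dist_max t0 + \<gamma> * Z + d0 < dist_hull m s"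
  shows "drift m s + 2 * Z \<le> - c * (1 - \<rho>) * exp (- c * (s - t0)) * dist_max t0"
proof -
  define V0 where "V0 = dist_max t0"
  define c2 where "c2 = real n * a_hi"
  define e where "e = dist_hull m s"
  have V0: "0 \<le> V0" unfolding V0_def by (rule dist_max_nonneg)
  have c2: "0 < c2" unfolding c2_def using n_pos a_hi_pos by simp
  have c: "c = c2 + a_lo" "0 < c" unfolding c_def c2_def using c2 a_lo_pos by (auto simp: c2_def)
  have c\<rho>: "c * \<rho> = c2 + a_lo * \<mu>0" unfolding \<rho>_def c2_def using c by simp
  have \<rho>: "\<mu>0 \<le> \<rho>" "\<rho> \<le> 1"
    using contraction_level_bounds[OF c2 a_lo_pos \<mu>0] unfolding \<rho>_def c_def c2_def by simp_all
  have \<gamma>': "2 + 2 * c2 * T \<le> c2 * \<gamma>" using \<gamma> unfolding c2_def by (simp add: mult.assoc)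
  moreover have "0 \<le> T" using s \<tau> by linarith
  ultimately have "0 \<le> \<gamma>" using gain_pos[OF c2] by force
  then have \<gamma>Z: "0 \<le> \<gamma> * Z" "(2 + 2 * c2 * T) * Z \<le> c * \<gamma> * Z"
    using \<gamma>' Z_nonneg c a_lo_pos by (auto intro!: mult_right_mono order_trans[OF \<gamma>'])
  have M: "\<forall>l\<in>{1..n}. dist_hull l s \<le> V0 + 2 * Z * T"
    unfolding V0_def using dist_hull_window_bound[OF t0] s \<tau> by auto
  have "\<rho> \<le> contraction c \<rho> (s - t0)" using \<rho>(2) by (simp add: contraction_def)
  then have "\<mu>0 * V0 \<le> contraction c \<rho> (s - t0) * V0"
    using V0 \<rho> by (intro mult_right_mono) auto
  then have i_closer: "dist_hull i s \<le> e"
    using close above \<gamma>Z(1) unfolding V0_def e_def by linarith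
  have "drift m s \<le> a_lo * (dist_hull i s - e) + c2 * (V0 + 2 * Z * T - e)"
    unfolding c2_def e_def by (rule drift_le_arc[OF m M arc i_closer[unfolded e_def]])
  also have "\<dots> = a_lo * dist_hull i s + c2 * V0 + 2 * c2 * T * Z - c * e"
    using c(1) by (simp add: algebra_simps)
  also have "\<dots> \<le> a_lo * (\<mu>0 * V0 + d0) + c2 * V0 + 2 * c2 * T * Z - c * e"
    using a_lo_pos close unfolding V0_def by simp
  also have "\<dots> = c * \<rho> * V0 + a_lo * d0 + 2 * c2 * T * Z - c * e"
    using c\<rho> by (simp add: algebra_simps)
  also have "\<dots> \<le> c * \<rho> * V0 + c * d0 + 2 * c2 * T * Z - c * e"
    using d0 c c2 by (simp add: mult_right_mono)
  also have "\<dots> \<le> c * \<rho> * V0 + c * d0 + 2 * c2 * T * Z - c * (contraction c \<rho> (s - t0) * V0 + \<gamma> * Z + d0)"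
    using above c(2) unfolding e_def V0_def by simp
  also have "\<dots> = - c * (1 - \<rho>) * exp (- c * (s - t0)) * V0 + 2 * c2 * T * Z - c * \<gamma> * Z"
    by (simp add: contraction_def algebra_simps)
  finally show ?thesis using \<gamma>Z(2) unfolding V0_def by (simp add: algebra_simps)
qed

lemma contraction_phase:
  fixes \<mu>0 \<gamma> d0 \<tau> T :: real
  defines "c \<equiv> n * a_hi + a_lo"
  defines "\<rho> \<equiv> (n * a_hi + a_lo * \<mu>0) / c"
  assumes t0: "0 \<le> t0" and m: "m \<in> {1..n}" and i: "i \<in> {1..n}" and \<tau>: "\<tau> \<le> T"
    and arc: "\<forall>s\<in>{t0..<t0 + \<tau>}. (Fv i, Fv m) \<in> \<sigma> s"
    and close: "\<forall>s\<in>{t0..<t0 + \<tau>}. dist_hull i s \<le> \<mu>0 * dist_max t0 + d0"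
    and d0: "0 \<le> d0" and \<mu>0: "0 \<le> \<mu>0" "\<mu>0 \<le> 1"
    and \<gamma>: "2 + 2 * real n * a_hi * T \<le> real n * a_hi * \<gamma>"
    and t: "t \<in> {t0..t0 + \<tau>}"
  shows "dist_hull m t \<le> contraction c \<rho> (t - t0) * dist_max t0 + \<gamma> * Z + d0"
proof -
  define H where "H = (\<lambda>s. contraction c \<rho> (s - t0) * dist_max t0 + \<gamma> * Z + d0)"
  define H' where "H' = (\<lambda>s. - c * (1 - \<rho>) * exp (- c * (s - t0)) * dist_max t0)"
  have "0 < \<gamma>"
    by (rule gain_pos[of "real n * a_hi" T]) (use n_pos a_hi_pos \<tau> t \<gamma> in \<open>auto simp: mult.assoc\<close>)
  then have "0 \<le> \<gamma> * Z" using Z_nonneg by simp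
  have "dist_hull m t \<le> H t"
  proof (rule dist_hull_comparison[OF t0 _ m])
    show "t0 \<le> t" using t by simp
    show "\<forall>s\<in>{t0<..<t}. (H has_real_derivative H' s) (at s)"
      unfolding H_def H'_def contraction_def by (auto intro!: derivative_eq_intros simp: algebra_simps)
    show "continuous_on {t0..t} H" unfolding H_def contraction_def by (intro continuous_intros)
    show "dist_hull m t0 \<le> H t0"
      using dist_hull_le_max[OF m, of t0] d0 \<open>0 \<le> \<gamma> * Z\<close> by (simp add: H_def contraction_def)
    show "\<forall>s\<in>{t0<..<t}. s \<notin> E \<longrightarrow> H s < dist_hull m s \<longrightarrow> drift m s + 2 * Z \<le> H' s"
    proof (intro ballI impI)
      fix s
      assume s: "s \<in> {t0<..<t}" and "s \<notin> E" and above: "H s < dist_hull m s"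
      then have dwell: "s \<in> {t0..<t0 + \<tau>}" using t by auto
      have arc_s: "i \<in> Nset n \<sigma> m s" using arc dwell i by (simp add: Nset_def)
      show "drift m s + 2 * Z \<le> H' s"
        unfolding H'_def c_def \<rho>_def
        by (rule contraction_supersolution[OF t0 _ _ \<tau> m arc_s _ d0 \<mu>0 \<gamma>])
          (use dwell close above in \<open>auto simp: H_def c_def \<rho>_def\<close>)
    qed
  qed
  then show ?thesis unfolding H_def .
qed

lemma recovery_phase:
  fixes \<gamma> d0 \<tau> T g :: real
  assumes t0: "0 \<le> t0" and m: "m \<in> {1..n}" and \<tau>: "0 \<le> \<tau>" "\<tau> \<le> T" and d0: "0 \<le> d0"
    and \<gamma>: "2 + 2 * real n * a_hi * T \<le> real n * a_hi * \<gamma>"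
    and init: "dist_hull m (t0 + \<tau>) \<le> g * dist_max t0 + \<gamma> * Z + d0"
    and t: "t \<in> {t0 + \<tau>..t0 + T}"
  shows "dist_hull m t \<le> recovery (n * a_hi) g (t - t0 - \<tau>) * dist_max t0 + \<gamma> * Z + d0"
proof -
  define V0 where "V0 = dist_max t0"
  define c2 where "c2 = real n * a_hi"
  have c2: "0 < c2" unfolding c2_def using n_pos a_hi_pos by simp
  define H where "H = (\<lambda>s. recovery c2 g (s - t0 - \<tau>) * V0 + \<gamma> * Z + d0)"
  define H' where "H' = (\<lambda>s. c2 * (1 - g) * exp (- c2 * (s - t0 - \<tau>)) * V0)"
  have "dist_hull m t \<le> H t"
  proof (rule dist_hull_comparison[OF _ _ m])
    show "0 \<le> t0 + \<tau>" "t0 + \<tau> \<le> t" using t0 \<tau> t by auto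
    show "\<forall>s\<in>{t0 + \<tau><..<t}. (H has_real_derivative H' s) (at s)"
      unfolding H_def H'_def recovery_def by (auto intro!: derivative_eq_intros simp: algebra_simps)
    show "continuous_on {t0 + \<tau>..t} H" unfolding H_def recovery_def by (intro continuous_intros)
    show "dist_hull m (t0 + \<tau>) \<le> H (t0 + \<tau>)" using init by (simp add: H_def V0_def recovery_def)
    show "\<forall>s\<in>{t0 + \<tau><..<t}. s \<notin> E \<longrightarrow> H s < dist_hull m s \<longrightarrow> drift m s + 2 * Z \<le> H' s"
    proof (intro ballI impI)
      fix s
      assume s: "s \<in> {t0 + \<tau><..<t}" and "s \<notin> E" and above: "H s < dist_hull m s"
      have M: "\<forall>l\<in>{1..n}. dist_hull l s \<le> V0 + 2 * Z * T"
        unfolding V0_def using dist_hull_window_bound[OF t0] s t \<tau> by auto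
      have "drift m s \<le> c2 * (V0 + 2 * Z * T - dist_hull m s)"
        unfolding c2_def by (rule drift_le[OF m M])
      moreover have "H' s = c2 * V0 - c2 * H s + c2 * \<gamma> * Z + c2 * d0"
        unfolding H_def H'_def recovery_def by (simp add: algebra_simps)
      moreover have "c2 * H s \<le> c2 * dist_hull m s" using above c2 by simp
      moreover have "(2 + 2 * c2 * T) * Z \<le> c2 * \<gamma> * Z"
        using \<gamma> Z_nonneg unfolding c2_def by (intro mult_right_mono) (auto simp: mult.assoc)
      moreover have "0 \<le> c2 * d0" using c2 d0 by simp
      moreover have "c2 * (V0 + 2 * Z * T - dist_hull m s) = c2 * V0 + 2 * c2 * T * Z - c2 * dist_hull m s"
        by (simp add: algebra_simps)
      moreover have "(2 + 2 * c2 * T) * Z = 2 * Z + 2 * c2 * T * Z" by (simp add: algebra_simps)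
      ultimately show "drift m s + 2 * Z \<le> H' s" by linarith
    qed
  qed
  then show ?thesis unfolding H_def V0_def c2_def .
qed

lemma follower_bound:
  fixes \<mu>0 \<gamma> d0 \<tau> T :: real
  defines "c \<equiv> n * a_hi + a_lo"
  defines "\<rho> \<equiv> (n * a_hi + a_lo * \<mu>0) / c"
  assumes t0: "0 \<le> t0" and m: "m \<in> {1..n}" and i: "i \<in> {1..n}" and \<tau>: "0 \<le> \<tau>" "\<tau> \<le> T"
    and arc: "\<forall>s\<in>{t0..<t0 + \<tau>}. (Fv i, Fv m) \<in> \<sigma> s"
    and close: "\<forall>s\<in>{t0..<t0 + \<tau>}. dist_hull i s \<le> \<mu>0 * dist_max t0 + d0"
    and d0: "0 \<le> d0" and \<mu>0: "0 \<le> \<mu>0" "\<mu>0 \<le> 1"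
    and \<gamma>: "2 + 2 * real n * a_hi * T \<le> real n * a_hi * \<gamma>"
    and t: "t \<in> {t0..t0 + T}"
  shows "dist_hull m t \<le> decay_profile c (n * a_hi) \<rho> \<tau> (t - t0) * dist_max t0 + \<gamma> * Z + d0"
proof (cases "t - t0 \<le> \<tau>")
  case True
  then show ?thesis
    using contraction_phase[OF t0 m i \<tau>(2) arc close d0 \<mu>0 \<gamma>, of t] t
    unfolding c_def \<rho>_def decay_profile_def by simp
next
  case False
  have "dist_hull m (t0 + \<tau>) \<le> contraction c \<rho> \<tau> * dist_max t0 + \<gamma> * Z + d0"
    using contraction_phase[OF t0 m i \<tau>(2) arc close d0 \<mu>0 \<gamma>, of "t0 + \<tau>"] \<tau>
    unfolding c_def \<rho>_def by simp
  from recovery_phase[OF t0 m \<tau> d0 \<gamma> this, of t]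
  show ?thesis using False t unfolding decay_profile_def by (simp add: diff_diff_eq)
qed

end

lemma traj5_follower_system:
  assumes n: "1 \<le> n" and k: "1 \<le> k" and a_lo: "0 < a_lo" and b_lo: "0 < b_lo"
    and traj: "traj5 n k d \<tau>D a_lo a_hi b_lo \<sigma> a b U W x y"
    and bounded: "\<exists>B. \<forall>t\<ge>0. znorm n k d U W y t \<le> B"
  shows "\<exists>E. follower_system n k d a_lo a_hi (SUP s\<in>{0..}. znorm n k d U W y s) \<sigma> a b U W x y E"
proof -
  obtain B where "\<forall>t\<ge>0. znorm n k d U W y t \<le> B" using bounded by blast
  then have "bdd_above (znorm n k d U W y ` {0..})" by (intro bdd_aboveI[of _ B]) auto
  then have Z: "\<forall>t\<ge>0. znorm n k d U W y t \<le> (SUP s\<in>{0..}. znorm n k d U W y s)"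
    by (auto intro: cSUP_upper)
  have a: "\<forall>i\<in>{1..n}. \<forall>j\<in>{1..n}. \<forall>X Y t. a_lo \<le> a i j X Y t \<and> a i j X Y t \<le> a_hi"
    using traj unfolding traj5_def by (elim conjE) blast
  have "\<forall>i\<in>{1..n}. \<forall>j\<in>{1..k}. \<forall>X Y t. b_lo \<le> b i j X Y t"
    using traj unfolding traj5_def by (elim conjE) blast
  then have b: "\<forall>i\<in>{1..n}. \<forall>j\<in>{1..k}. \<forall>X Y t. 0 \<le> b i j X Y t"
    using b_lo by (meson less_le_trans less_imp_le)
  obtain E where "\<forall>T. finite (E \<inter> {0..T})"
    "\<forall>c<d. (\<forall>i\<in>{1..n}. continuous_on {0..} (\<lambda>s. x i s c)) \<and> (\<forall>i\<in>{1..k}. continuous_on {0..} (\<lambda>s. y i s c))"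
    "\<forall>t. t > 0 \<and> t \<notin> E \<longrightarrow> (\<forall>c<d.
       (\<forall>i\<in>{1..k}. ((\<lambda>s. y i s c) has_real_derivative U i (st k y t) t c) (at t))
     \<and> (\<forall>i\<in>{1..n}. ((\<lambda>s. x i s c) has_real_derivative
           (\<Sum>j\<in>Nset n \<sigma> i t. a i j (st n x t) (st k y t) t * (x j t c - x i t c))
         + (\<Sum>j\<in>Lset k \<sigma> i t. b i j (st n x t) (st k y t) t * (y j t c - x i t c))
         + W i t c) (at t)))"
    using traj unfolding traj5_def by (elim conjE exE) blast
  then have "follower_system n k d a_lo a_hi (SUP s\<in>{0..}. znorm n k d U W y s) \<sigma> a b U W x y E"
    using n k a_lo a b Z by unfold_locales auto
  then show ?thesis by blast
qed

lemma trajectory_bound: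
  assumes hyps: "1 \<le> k \<and> 1 \<le> d \<and> 0 < b_lo
      \<and> traj5 n k d \<tau>D a_lo a_hi b_lo \<sigma> a b U W x y
      \<and> (\<exists>B. \<forall>t\<ge>0. znorm n k d U W y t \<le> B)
      \<and> 0 \<le> t0 \<and> 0 < d0 \<and> i \<in> {1..n} \<and> m \<in> {1..n}
      \<and> (\<forall>t\<in>{t0..<t0+\<tau>D}. (Fv i, Fv m) \<in> \<sigma> t)
      \<and> (\<forall>t\<in>{t0..<t0+\<tau>D}. fdist k d x y i t \<le> \<mu>0 * hdist n k d x y t0 + d0)"
    and t: "t \<in> {t0..t0 + T}"
    and n: "1 \<le> n" and a_lo: "0 < a_lo" and \<tau>D: "0 \<le> \<tau>D" "\<tau>D \<le> T" and \<mu>0: "0 \<le> \<mu>0" "\<mu>0 \<le> 1"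
    and \<gamma>: "2 + 2 * real n * a_hi * T \<le> real n * a_hi * \<gamma>"
  shows "fdist k d x y m t
    \<le> decay_profile (real n * a_hi + a_lo) (real n * a_hi) ((real n * a_hi + a_lo * \<mu>0) / (real n * a_hi + a_lo))
        \<tau>D (t - t0) * hdist n k d x y t0 + \<gamma> * (SUP s\<in>{0..}. znorm n k d U W y s) + d0"
proof -
  from hyps have k: "1 \<le> k" and b_lo: "0 < b_lo" and traj: "traj5 n k d \<tau>D a_lo a_hi b_lo \<sigma> a b U W x y"
    and bounded: "\<exists>B. \<forall>t\<ge>0. znorm n k d U W y t \<le> B"
    and t0: "0 \<le> t0" and d0: "0 < d0" and i: "i \<in> {1..n}" and m: "m \<in> {1..n}"
    and arc: "\<forall>s\<in>{t0..<t0 + \<tau>D}. (Fv i, Fv m) \<in> \<sigma> s"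
    and close: "\<forall>s\<in>{t0..<t0 + \<tau>D}. fdist k d x y i s \<le> \<mu>0 * hdist n k d x y t0 + d0"
    by auto
  obtain E where "follower_system n k d a_lo a_hi (SUP s\<in>{0..}. znorm n k d U W y s) \<sigma> a b U W x y E"
    using traj5_follower_system[OF n k a_lo b_lo traj bounded] by blast
  then interpret follower_system n k d a_lo a_hi "SUP s\<in>{0..}. znorm n k d U W y s" \<sigma> a b U W x y E .
  show ?thesis
    using follower_bound[OF t0 m i \<tau>D arc close _ \<mu>0 \<gamma> t] d0 by simp
qed

theorem lemma6:
  fixes n :: nat and \<mu>0 a_lo a_hi \<tau>D Tst :: real
  assumes "2 \<le> n" and "0 < a_lo" and "a_lo \<le> a_hi" and "0 < \<tau>D" and "\<tau>D < Tst"
    and "0 < \<mu>0" and "\<mu>0 < 1"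
  shows "\<exists>(\<xi>::real \<Rightarrow> real) (\<gamma>2::real).
     continuous_on {0..Tst} \<xi>
   \<and> (\<forall>s\<in>{0..Tst}. 0 < \<xi> s \<and> \<xi> s \<le> 1)
   \<and> \<xi> 0 = 1
   \<and> (\<forall>s\<in>{0..\<tau>D}. \<forall>s'\<in>{0..\<tau>D}. s < s' \<longrightarrow> \<xi> s' < \<xi> s)
   \<and> (\<forall>s\<in>{\<tau>D..Tst}. \<forall>s'\<in>{\<tau>D..Tst}. s < s' \<longrightarrow> \<xi> s < \<xi> s')
   \<and> \<xi> Tst < 1
   \<and> 0 < \<gamma>2
   \<and> (\<forall>(k::nat) (d::nat) (b_lo::real) (\<sigma>::real \<Rightarrow> digraph)
        (a::nat \<Rightarrow> nat \<Rightarrow> state \<Rightarrow> state \<Rightarrow> real \<Rightarrow> real) (b::nat \<Rightarrow> nat \<Rightarrow> state \<Rightarrow> state \<Rightarrow> real \<Rightarrow> real)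
        (U::nat \<Rightarrow> state \<Rightarrow> real \<Rightarrow> pt) (W::nat \<Rightarrow> real \<Rightarrow> pt)
        (x::nat \<Rightarrow> real \<Rightarrow> pt) (y::nat \<Rightarrow> real \<Rightarrow> pt) (t0::real) (d0::real) (i::nat) (m::nat).
        1 \<le> k \<and> 1 \<le> d \<and> 0 < b_lo
      \<and> traj5 n k d \<tau>D a_lo a_hi b_lo \<sigma> a b U W x y
      \<and> (\<exists>B. \<forall>t\<ge>0. znorm n k d U W y t \<le> B)
      \<and> 0 \<le> t0 \<and> 0 < d0 \<and> i \<in> {1..n} \<and> m \<in> {1..n}
      \<and> (\<forall>t\<in>{t0..<t0+\<tau>D}. (Fv i, Fv m) \<in> \<sigma> t)
      \<and> (\<forall>t\<in>{t0..<t0+\<tau>D}. fdist k d x y i t \<le> \<mu>0 * hdist n k d x y t0 + d0)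
      \<longrightarrow> (\<forall>t\<in>{t0..t0+Tst}. fdist k d x y m t
              \<le> \<xi> (t - t0) * hdist n k d x y t0
                 + \<gamma>2 * (SUP s\<in>{0..}. znorm n k d U W y s) + d0))"
proof -
  let ?c2 = "real n * a_hi"
  let ?\<rho> = "(real n * a_hi + a_lo * \<mu>0) / (real n * a_hi + a_lo)"
  define \<gamma> where "\<gamma> = 2 / ?c2 + 2 * Tst"
  have c2: "0 < ?c2" using assms(1-3) by simp
  have \<rho>: "0 < ?\<rho>" "?\<rho> < 1"
  proof -
    have "0 < a_lo * \<mu>0" "a_lo * \<mu>0 < a_lo" using assms(2,6,7) by simp_all
    then show "0 < ?\<rho>" "?\<rho> < 1" using c2 by simp_all
  qed
  have "?c2 * \<gamma> = ?c2 * (2 / ?c2) + 2 * ?c2 * Tst" by (simp add: \<gamma>_def algebra_simps)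
  also have "?c2 * (2 / ?c2) = 2" using assms(1-3) by simp
  finally have "?c2 * \<gamma> = 2 + 2 * ?c2 * Tst" .
  then have \<gamma>: "2 + 2 * real n * a_hi * Tst \<le> real n * a_hi * \<gamma>" by (simp add: mult.assoc)
  have \<gamma>_pos: "0 < \<gamma>"
    unfolding \<gamma>_def using c2 assms(4,5) by (intro add_pos_pos) auto
  have c: "0 < ?c2 + a_lo" using c2 assms(2) by simp
  note shape = decay_profile_shape[OF c c2 \<rho> assms(4,5)]
  show ?thesis
    by (intro exI[of _ "decay_profile (?c2 + a_lo) ?c2 ?\<rho> \<tau>D"] exI[of _ \<gamma>] conjI allI impI ballI;
        (erule trajectory_bound)?)
      (use shape \<gamma>_pos \<gamma> assms in auto)
qed

end
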